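(* Let $r>0$ and assume $W$ satisfies (H). Then there exists a local minimizer $u\in L^\infty(\mathbb{R})$ of $\mathcal{E}$ which is monotone nondecreasing and satisfies $\lim_{x\to\pm\infty}u(x)=\pm1$. Moreover $$\mathcal{E}(u)=\min\Big\{\mathcal{E}(v)\ :\ v\in L^\infty(\mathbb{R})\text{ monotone nondecreasing with }\lim_{x\to\pm\infty}v(x)=\pm1\Big\}\le \min\Big\{\frac4r,\,4+c_W\Big\}.$$
   Context: Fix $r>0$. For an interval $I\subset\mathbb{R}$ and $u\in L^\infty(I)$, $\operatorname{osc}_I u:=\operatorname{ess\,sup}_I u-\operatorname{ess\,inf}_I u$. For $a<b$ with $b-a>2r$ and $u\in L^\infty_{\rm loc}(\mathbb{R})$, $$\mathcal{E}_{(a,b)}(u):=\frac1{2r^2}\int_a^b\Big(\operatorname{osc}_{(x-r,x+r)}u\Big)^2dx+\int_a^b W(u(x))\,dx,$$ and $\mathcal{E}(u):=\frac1{2r^2}\int_{\mathbb{R}}(\operatorname{osc}_{(x-r,x+r)}u)^2dx+\int_{\mathbb{R}}W(u(x))dx$. A function $u\in L^\infty_{\rm loc}(\mathbb{R})$ is a local minimizer of $\mathcal{E}$ if for all $a<b$ and all $v\in L^\infty_{\rm loc}(\mathbb{R})$ with $u=v$ a.e. outside $[a+r,b-r]$ one has $\mathcal{E}_{(a,b)}(u)\le\mathcal{E}_{(a,b)}(v)$. Assumption (H) on $W$: $W\in C(\mathbb{R})$, $W(-1)=W(1)=0<W(t)$ for all $t\ne\pm1$; $W$ is strictly decreasing on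 $(-\infty,-1)$ and strictly increasing on $(1,+\infty)$; $W$ is even on $[-1,1]$ and has a unique local maximum in $[-1,1]$, at $t=0$. Set $c_W:=\int_{-1}^1W(s)\,ds>0$. Limits of $L^\infty$ functions are understood in the essential sense. *)

theory Defs
  imports "HOL-Analysis.Analysis"
begin

definition ess_sup_on :: "real set \<Rightarrow> (real \<Rightarrow> real) \<Rightarrow> real" where
  "ess_sup_on I u = Inf {c. AE x in lebesgue. x \<in> I \<longrightarrow> u x \<le> c}"

definition ess_inf_on :: "real set \<Rightarrow> (real \<Rightarrow> real) \<Rightarrow> real" where
  "ess_inf_on I u = Sup {c. AE x in lebesgue. x \<in> I \<longrightarrow> c \<le> u x}"

definition osc_on :: "real set \<Rightarrow> (real \<Rightarrow> real) \<Rightarrow> real" where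
  "osc_on I u = ess_sup_on I u - ess_inf_on I u"

definition Linf :: "(real \<Rightarrow> real) \<Rightarrow> bool" where
  "Linf u \<longleftrightarrow> u \<in> borel_measurable lebesgue \<and> (\<exists>C. AE x in lebesgue. \<bar>u x\<bar> \<le> C)"

definition Linf_loc :: "(real \<Rightarrow> real) \<Rightarrow> bool" where
  "Linf_loc u \<longleftrightarrow> u \<in> borel_measurable lebesgue \<and>
     (\<forall>a b. \<exists>C. AE x in lebesgue. x \<in> {a..b} \<longrightarrow> \<bar>u x\<bar> \<le> C)"

definition energy_on :: "real \<Rightarrow> (real \<Rightarrow> real) \<Rightarrow> real \<Rightarrow> real \<Rightarrow> (real \<Rightarrow> real) \<Rightarrow> ennreal" where
  "energy_on r W a b u =
     (\<integral>\<^sup>+ x. indicator {a<..<b} x * ennreal ((osc_on {x-r<..<x+r} u)\<^sup>2 / (2 * r\<^sup>2)) \<partial>lebesgue)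
   + (\<integral>\<^sup>+ x. indicator {a<..<b} x * ennreal (W (u x)) \<partial>lebesgue)"

definition energy :: "real \<Rightarrow> (real \<Rightarrow> real) \<Rightarrow> (real \<Rightarrow> real) \<Rightarrow> ennreal" where
  "energy r W u =
     (\<integral>\<^sup>+ x. ennreal ((osc_on {x-r<..<x+r} u)\<^sup>2 / (2 * r\<^sup>2)) \<partial>lebesgue)
   + (\<integral>\<^sup>+ x. ennreal (W (u x)) \<partial>lebesgue)"

definition local_minimizer :: "real \<Rightarrow> (real \<Rightarrow> real) \<Rightarrow> (real \<Rightarrow> real) \<Rightarrow> bool" where
  "local_minimizer r W u \<longleftrightarrow> Linf_loc u \<and>
     (\<forall>a b v. a < b \<longrightarrow> b - a > 2 * r \<longrightarrow> Linf_loc v \<longrightarrow>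
        (AE x in lebesgue. x \<notin> {a+r..b-r} \<longrightarrow> u x = v x) \<longrightarrow>
        energy_on r W a b u \<le> energy_on r W a b v)"

definition local_max_in :: "real set \<Rightarrow> (real \<Rightarrow> real) \<Rightarrow> real \<Rightarrow> bool" where
  "local_max_in S W t \<longleftrightarrow> t \<in> S \<and> (\<exists>\<delta>>0. \<forall>s\<in>S. \<bar>s - t\<bar> < \<delta> \<longrightarrow> W s \<le> W t)"

definition hyp_H :: "(real \<Rightarrow> real) \<Rightarrow> bool" where
  "hyp_H W \<longleftrightarrow> continuous_on UNIV W \<and> W (-1) = 0 \<and> W 1 = 0 \<and>
     (\<forall>t. t \<noteq> 1 \<and> t \<noteq> -1 \<longrightarrow> W t > 0) \<and>
     (\<forall>s t. s < t \<and> t < -1 \<longrightarrow> W t < W s) \<and>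
     (\<forall>s t. 1 < s \<and> s < t \<longrightarrow> W s < W t) \<and>
     (\<forall>t\<in>{-1..1}. W (-t) = W t) \<and>
     (\<forall>t. local_max_in {-1..1} W t \<longleftrightarrow> t = 0)"

definition c_W :: "(real \<Rightarrow> real) \<Rightarrow> real" where
  "c_W W = integral {-1..1} W"

definition admissible :: "(real \<Rightarrow> real) \<Rightarrow> bool" where
  "admissible v \<longleftrightarrow> Linf v \<and> mono v \<and> (v \<longlongrightarrow> 1) at_top \<and> (v \<longlongrightarrow> -1) at_bot"

end

theory Submission
  imports Defs "HOL-Library.Diagonal_Subsequence"
begin

text \<open>Sampling a profile \<open>v\<close> along a lattice \<open>t + h\<int>\<close> with \<open>0 < h < 2r\<close>, each increment
  \<open>v (y + h) - v y\<close> is bounded by the oscillation of \<open>v\<close> on the window of radius \<open>r\<close> around the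
  midpoint. Averaging over the offset \<open>t \<in> [0, h)\<close> gives \<open>h m \<le> energy r W v\<close>, where \<open>m\<close> is
  the infimum of the discrete energy \<open>\<Sum>k. (b (k+1) - b k)\<^sup>2 / (2r\<^sup>2) + W (b k)\<close> over sequences
  joining \<open>-1\<close> to \<open>1\<close>; letting \<open>h \<rightarrow> 2r\<close> yields \<open>2r m \<le> energy r W v\<close>. The infimum is
  attained, by compactness once the sequences are reduced to monotone, centred ones, and the
  staircase \<open>x \<mapsto> a \<lfloor>x / (2r)\<rfloor>\<close> built from a discrete minimizer \<open>a\<close> has energy at most
  \<open>2r m\<close>. It is therefore a minimizer among admissible profiles and, since the lower bound also
  applies to compact perturbations of it, a local minimizer. The sign sequence gives
  \<open>m \<le> 2/r\<^sup>2\<close>, and averaging the clamped ramps \<open>k \<mapsto> clamp (s + 2rk)\<close> over \<open>s\<close> gives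
  \<open>2r m \<le> 4 + c_W W\<close>.\<close>

section \<open>The double-well potential\<close>

lemma hyp_H_nonneg: "hyp_H W \<Longrightarrow> 0 \<le> W t"
  unfolding hyp_H_def by (metis order.refl less_imp_le)

lemma hyp_H_pos: "hyp_H W \<Longrightarrow> t \<noteq> 1 \<Longrightarrow> t \<noteq> -1 \<Longrightarrow> 0 < W t"
  unfolding hyp_H_def by blast

lemma hyp_H_one: "hyp_H W \<Longrightarrow> W 1 = 0"
  and hyp_H_minus_one: "hyp_H W \<Longrightarrow> W (-1) = 0"
  unfolding hyp_H_def by auto

lemma hyp_H_continuous_on: "hyp_H W \<Longrightarrow> continuous_on S W"
  unfolding hyp_H_def using continuous_on_subset by blast

lemma hyp_H_isCont: "hyp_H W \<Longrightarrow> isCont W t"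
  using hyp_H_continuous_on continuous_on_eq_continuous_at open_UNIV by blast

lemma hyp_H_borel_measurable: "hyp_H W \<Longrightarrow> W \<in> borel_measurable borel"
  by (intro borel_measurable_continuous_onI hyp_H_continuous_on)

text \<open>A maximum of \<open>W\<close> on \<open>[s, 1]\<close> exceeding \<open>W s\<close> would be a local maximum in \<open>(0, 1)\<close>.\<close>
lemma hyp_H_antimono_unit:
  assumes H: "hyp_H W" and s: "0 \<le> s" "s \<le> t" "t \<le> 1"
  shows "W t \<le> W s"
proof (rule ccontr)
  assume "\<not> W t \<le> W s"
  obtain p where p: "p \<in> {s..1}" "\<And>y. y \<in> {s..1} \<Longrightarrow> W y \<le> W p"
    using continuous_attains_sup[of "{s..1}" W] hyp_H_continuous_on[OF H] s by auto
  have "W s < W p" using p s \<open>\<not> W t \<le> W s\<close> by force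
  moreover have "0 \<le> W s" using hyp_H_nonneg[OF H] .
  ultimately have pin: "s < p" "p < 1" using p hyp_H_one[OF H] by (auto simp: order.order_iff_strict)
  have "local_max_in {-1..1} W p"
    unfolding local_max_in_def
  proof (intro conjI exI[of _ "min (p - s) (1 - p)"])
    show "\<forall>y\<in>{- 1..1}. \<bar>y - p\<bar> < min (p - s) (1 - p) \<longrightarrow> W y \<le> W p"
      using p(2) by (auto simp: abs_less_iff)
  qed (use pin s in auto)
  hence "p = 0" using H unfolding hyp_H_def by blast
  thus False using pin s by simp
qed

lemma hyp_H_le_abs:
  assumes H: "hyp_H W" and "\<bar>x\<bar> \<le> \<bar>y\<bar>" "\<bar>y\<bar> \<le> 1"
  shows "W y \<le> W x"
proof -
  have even: "W \<bar>z\<bar> = W z" if "\<bar>z\<bar> \<le> 1" for z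
    using H that unfolding hyp_H_def by (cases "z \<ge> 0") auto
  have "W \<bar>y\<bar> \<le> W \<bar>x\<bar>" using hyp_H_antimono_unit[OF H, of "\<bar>x\<bar>" "\<bar>y\<bar>"] assms by simp
  thus ?thesis using even assms by simp
qed

definition clamp :: "real \<Rightarrow> real" where
  "clamp t = max (-1) (min 1 t)"

lemma abs_clamp_le: "\<bar>clamp t\<bar> \<le> 1"
  unfolding clamp_def by auto

lemma clamp_lipschitz: "\<bar>clamp x - clamp y\<bar> \<le> \<bar>x - y\<bar>"
  unfolding clamp_def by auto

lemma mono_clamp: "mono clamp"
  unfolding clamp_def by (auto intro: monoI)

lemma isCont_clamp: "isCont clamp x"
  unfolding clamp_def by (intro continuous_intros)

lemma borel_measurable_clamp [measurable]: "clamp \<in> borel_measurable borel"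
  unfolding clamp_def[abs_def] by measurable

lemma tendsto_clamp_at_top: "(clamp \<longlongrightarrow> 1) at_top"
  by (rule tendsto_eventually) (use eventually_ge_at_top[of 1] in \<open>eventually_elim, simp add: clamp_def\<close>)

lemma tendsto_clamp_at_bot: "(clamp \<longlongrightarrow> -1) at_bot"
  by (rule tendsto_eventually) (use eventually_le_at_bot[of "-1"] in \<open>eventually_elim, simp add: clamp_def\<close>)

lemma hyp_H_clamp_le: "hyp_H W \<Longrightarrow> W (clamp t) \<le> W t"
  unfolding clamp_def using hyp_H_nonneg[of W t] hyp_H_one[of W] hyp_H_minus_one[of W]
  by (cases "t \<le> -1"; cases "t \<ge> 1") (auto simp: max_def min_def)

lemma hyp_H_clamp_eq: "hyp_H W \<Longrightarrow> W (clamp x) = indicator {-1..1} x * W x"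
  unfolding clamp_def using hyp_H_one[of W] hyp_H_minus_one[of W]
  by (auto simp: max_def min_def indicator_def)

section \<open>The lattice problem\<close>

definition lattice_term :: "real \<Rightarrow> (real \<Rightarrow> real) \<Rightarrow> (int \<Rightarrow> real) \<Rightarrow> int \<Rightarrow> real" where
  "lattice_term r W b k = (b (k+1) - b k)\<^sup>2 / (2*r\<^sup>2) + W (b k)"

definition lattice_energy :: "real \<Rightarrow> (real \<Rightarrow> real) \<Rightarrow> (int \<Rightarrow> real) \<Rightarrow> ennreal" where
  "lattice_energy r W b = (\<integral>\<^sup>+k. ennreal (lattice_term r W b k) \<partial>count_space UNIV)"

definition joins_wells :: "(int \<Rightarrow> real) \<Rightarrow> bool" where
  "joins_wells b \<longleftrightarrow> (b \<longlongrightarrow> 1) at_top \<and> (b \<longlongrightarrow> -1) at_bot"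

definition centered_profiles :: "(int \<Rightarrow> real) set" where
  "centered_profiles =
     {c. mono c \<and> (\<forall>k. \<bar>c k\<bar> \<le> 1) \<and> joins_wells c \<and> c (-1) \<le> 0 \<and> 0 \<le> c 0}"

text \<open>Fixing the sign change at \<open>0\<close> removes the translation invariance, which the existence of a
  minimizer needs; no energy is lost (see \<open>exists_centered_profile_le\<close>).\<close>
definition lattice_min :: "real \<Rightarrow> (real \<Rightarrow> real) \<Rightarrow> ennreal" where
  "lattice_min r W = Inf (lattice_energy r W ` centered_profiles)"

lemma mono_intI:
  fixes f :: "int \<Rightarrow> 'a::order"
  assumes "\<And>k. f k \<le> f (k+1)"
  shows "mono f"
proof (rule monoI)
  fix i j :: int assume "i \<le> j"
  thus "f i \<le> f j"
    by (induction j rule: int_ge_induct) (auto intro: order_trans assms)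
qed

lemma lattice_energy_shift: "lattice_energy r W (\<lambda>k. b (k + K)) = lattice_energy r W b"
proof -
  have "bij_betw (\<lambda>k::int. k + K) UNIV UNIV"
    by (rule bij_betw_byWitness[of _ "\<lambda>k. k - K"]) auto
  moreover have "lattice_term r W (\<lambda>k. b (k + K)) k = lattice_term r W b (k + K)" for k
    by (simp add: lattice_term_def ac_simps)
  ultimately show ?thesis
    unfolding lattice_energy_def
    using nn_integral_bij_count_space[of _ UNIV UNIV "\<lambda>k. ennreal (lattice_term r W b k)"] by simp
qed

lemma joins_wells_shift:
  assumes "joins_wells b"
  shows "joins_wells (\<lambda>k. b (k + K))"
proof -
  have "filterlim (\<lambda>k::int. k + K) at_top at_top"
    unfolding filterlim_at_top
  proof
    fix Z show "\<forall>\<^sub>F k in at_top. Z \<le> k + K"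
      using eventually_ge_at_top[of "Z - K"] by eventually_elim simp
  qed
  moreover have "filterlim (\<lambda>k::int. k + K) at_bot at_bot"
    unfolding filterlim_at_bot
  proof
    fix Z show "\<forall>\<^sub>F k in at_bot. k + K \<le> Z"
      using eventually_le_at_bot[of "Z - K"] by eventually_elim simp
  qed
  ultimately show ?thesis using assms filterlim_compose unfolding joins_wells_def by blast
qed

lemma lattice_energy_le_termwise:
  assumes "\<And>k. \<bar>c (k+1) - c k\<bar> \<le> \<bar>b (k+1) - b k\<bar>" and "\<And>k. W (c k) \<le> W (b k)"
  shows "lattice_energy r W c \<le> lattice_energy r W b"
  unfolding lattice_energy_def lattice_term_def
proof (intro nn_integral_mono ennreal_leI add_mono divide_right_mono)
  show "(c (k+1) - c k)\<^sup>2 \<le> (b (k+1) - b k)\<^sup>2" for k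
    using assms(1)[of k] by (simp add: abs_le_square_iff)
qed (use assms(2) in auto)

lemma exists_sign_change:
  fixes f :: "int \<Rightarrow> real"
  assumes "\<forall>\<^sub>F k in at_bot. f k < 0" and "0 \<le> f M"
  shows "\<exists>K. f (K - 1) < 0 \<and> 0 \<le> f K"
proof (rule ccontr)
  assume no_change: "\<not> ?thesis"
  obtain N where N: "\<And>k. k \<le> N \<Longrightarrow> f k < 0"
    using assms(1) by (auto simp: eventually_at_bot_linorder)
  have "0 \<le> f (M - int n)" for n
  proof (induction n)
    case (Suc n)
    hence "0 \<le> f ((M - int n) - 1)" using no_change by (meson not_le)
    thus ?case by (metis add.commute diff_diff_eq of_nat_Suc)
  qed (use assms(2) in simp)
  from this[of "nat (M - N)"] N[of "M - int (nat (M - N))"] show False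
    by (auto split: if_splits)
qed

lemma exists_centered_clamped_shift:
  assumes H: "hyp_H W" and b: "joins_wells b"
  shows "\<exists>\<beta>. (\<forall>k. \<bar>\<beta> k\<bar> \<le> 1) \<and> \<beta> (-1) < 0 \<and> 0 \<le> \<beta> 0 \<and> joins_wells \<beta> \<and>
           lattice_energy r W \<beta> \<le> lattice_energy r W b"
proof -
  define b' where "b' k = clamp (b k)" for k
  have "(b' \<longlongrightarrow> clamp 1) at_top" "(b' \<longlongrightarrow> clamp (-1)) at_bot"
    unfolding b'_def using b isCont_tendsto_compose[OF isCont_clamp] by (auto simp: joins_wells_def)
  hence b': "joins_wells b'" by (simp add: joins_wells_def clamp_def)
  have "\<forall>\<^sub>F k in at_bot. b' k < 0"
    using order_tendstoD(2)[of b' "-1" at_bot 0] b' by (simp add: joins_wells_def)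
  moreover obtain M where "0 \<le> b' M"
  proof -
    have "\<forall>\<^sub>F k in at_top. 0 < b' k"
      using order_tendstoD(1)[of b' 1 at_top 0] b' by (simp add: joins_wells_def)
    thus ?thesis using that by (metis eventually_at_top_linorder order.refl less_imp_le)
  qed
  ultimately obtain K where K: "b' (K - 1) < 0" "0 \<le> b' K" using exists_sign_change by blast
  have "lattice_energy r W b' \<le> lattice_energy r W b"
    unfolding b'_def using clamp_lipschitz hyp_H_clamp_le[OF H] by (rule lattice_energy_le_termwise)
  moreover have "lattice_energy r W (\<lambda>k. b' (k + K)) = lattice_energy r W b'"
    by (rule lattice_energy_shift)
  ultimately show ?thesis using K joins_wells_shift[OF b', of K]
    by (intro exI[of _ "\<lambda>k. b' (k + K)"]) (auto simp: b'_def abs_clamp_le add.commute)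
qed

text \<open>Pushing every value outwards to the running maximum of \<open>\<bar>\<beta>\<bar>\<close> (counted from the origin)
  can only lower \<open>W\<close> and never enlarges a jump.\<close>
definition envelope :: "(int \<Rightarrow> real) \<Rightarrow> int \<Rightarrow> real" where
  "envelope \<beta> k = (if 0 \<le> k then Max ((\<lambda>j. \<bar>\<beta> j\<bar>) ` {0..k}) else - Max ((\<lambda>j. \<bar>\<beta> j\<bar>) ` {k..-1}))"

lemma envelope_succ: "0 \<le> k \<Longrightarrow> envelope \<beta> (k+1) = max (envelope \<beta> k) \<bar>\<beta> (k+1)\<bar>"
proof -
  assume k: "0 \<le> k"
  hence "{0..k+1} = insert (k+1) {0..k}" by auto
  thus ?thesis using k by (simp add: envelope_def Max_insert max.commute)
qed

lemma envelope_pred: "k \<le> -2 \<Longrightarrow> envelope \<beta> k = min (envelope \<beta> (k+1)) (- \<bar>\<beta> k\<bar>)"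
proof -
  assume k: "k \<le> -2"
  hence "{k..-1} = insert k {k+1..-1}" by auto
  hence "envelope \<beta> k = - max \<bar>\<beta> k\<bar> (Max ((\<lambda>j. \<bar>\<beta> j\<bar>) ` {k+1..-1}))"
    using k by (simp add: envelope_def Max_insert)
  moreover have "envelope \<beta> (k+1) = - Max ((\<lambda>j. \<bar>\<beta> j\<bar>) ` {k+1..-1})"
    using k by (simp add: envelope_def)
  ultimately show ?thesis by (simp add: min_def max_def)
qed

lemma envelope_bounds:
  assumes "\<And>j. \<bar>\<beta> j\<bar> \<le> 1"
  shows "\<bar>\<beta> k\<bar> \<le> \<bar>envelope \<beta> k\<bar> \<and> \<bar>envelope \<beta> k\<bar> \<le> 1 \<and>
         (0 \<le> k \<longrightarrow> 0 \<le> envelope \<beta> k) \<and> (k < 0 \<longrightarrow> envelope \<beta> k \<le> 0)"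
proof -
  define S where "S = (if 0 \<le> k then {0..k} else {k..-1})"
  have k: "k \<in> S" "finite S" by (auto simp: S_def)
  have "\<bar>\<beta> k\<bar> \<le> Max ((\<lambda>j. \<bar>\<beta> j\<bar>) ` S)" using k by (intro Max_ge) auto
  moreover have "Max ((\<lambda>j. \<bar>\<beta> j\<bar>) ` S) \<le> 1" using k assms by (subst Max_le_iff) auto
  moreover have "envelope \<beta> k = (if 0 \<le> k then 1 else -1) * Max ((\<lambda>j. \<bar>\<beta> j\<bar>) ` S)"
    by (simp add: envelope_def S_def)
  ultimately show ?thesis using abs_ge_zero[of "\<beta> k"] by (auto simp: abs_mult)
qed

lemma envelope_step:
  assumes "\<And>j. \<bar>\<beta> j\<bar> \<le> 1" and "\<beta> (-1) < 0" and "0 \<le> \<beta> 0"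
  shows "envelope \<beta> k \<le> envelope \<beta> (k+1) \<and>
         \<bar>envelope \<beta> (k+1) - envelope \<beta> k\<bar> \<le> \<bar>\<beta> (k+1) - \<beta> k\<bar>"
proof -
  note bounds = envelope_bounds[of \<beta>, OF assms(1)]
  consider "0 \<le> k" | "k = -1" | "k \<le> -2" by linarith
  thus ?thesis
  proof cases
    case 1
    have "\<bar>\<beta> k\<bar> \<le> envelope \<beta> k" using bounds[of k] 1 by (metis abs_of_nonneg)
    thus ?thesis using envelope_succ[OF 1] by (auto simp: max_def abs_if split: if_splits)
  next
    case 2
    thus ?thesis using assms(2,3) by (simp add: envelope_def)
  next
    case 3
    have "envelope \<beta> (k+1) \<le> - \<bar>\<beta> (k+1)\<bar>" using bounds[of "k+1"] 3 by (smt (verit))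
    thus ?thesis using envelope_pred[OF 3] by (auto simp: min_def abs_if split: if_splits)
  qed
qed

lemma envelope_joins_wells:
  assumes "\<And>j. \<bar>\<beta> j\<bar> \<le> 1" and "joins_wells \<beta>"
  shows "joins_wells (envelope \<beta>)"
proof -
  note bounds = envelope_bounds[of \<beta>, OF assms(1)]
  have "(envelope \<beta> \<longlongrightarrow> 1) at_top"
  proof (rule tendsto_sandwich[of "\<lambda>k. \<bar>\<beta> k\<bar>" _ at_top "\<lambda>k. 1"])
    show "\<forall>\<^sub>F k in at_top. \<bar>\<beta> k\<bar> \<le> envelope \<beta> k"
      using eventually_ge_at_top[of 0] by eventually_elim (metis abs_of_nonneg bounds)
    show "((\<lambda>k. \<bar>\<beta> k\<bar>) \<longlongrightarrow> 1) at_top"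
      using tendsto_rabs assms(2) unfolding joins_wells_def by fastforce
  qed (use bounds in \<open>auto simp: abs_le_iff\<close>)
  moreover have "(envelope \<beta> \<longlongrightarrow> -1) at_bot"
  proof (rule tendsto_sandwich[of "\<lambda>k. -1" _ at_bot "\<lambda>k. - \<bar>\<beta> k\<bar>"])
    show "\<forall>\<^sub>F k in at_bot. envelope \<beta> k \<le> - \<bar>\<beta> k\<bar>"
      using eventually_le_at_bot[of "-1"] by eventually_elim (smt (verit) bounds)
    show "((\<lambda>k. - \<bar>\<beta> k\<bar>) \<longlongrightarrow> -1) at_bot"
      using tendsto_minus[OF tendsto_rabs, of \<beta> "-1"] assms(2) unfolding joins_wells_def by simp
  qed (use bounds in \<open>auto simp: abs_le_iff\<close>)
  ultimately show ?thesis by (simp add: joins_wells_def)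
qed

lemma exists_centered_profile_le:
  assumes H: "hyp_H W" and b: "joins_wells b"
  shows "\<exists>c\<in>centered_profiles. lattice_energy r W c \<le> lattice_energy r W b"
proof -
  obtain \<beta> where \<beta>: "\<And>k. \<bar>\<beta> k\<bar> \<le> 1" "\<beta> (-1) < 0" "0 \<le> \<beta> 0" "joins_wells \<beta>"
    and le: "lattice_energy r W \<beta> \<le> lattice_energy r W b"
    using exists_centered_clamped_shift[OF H b] by blast
  note bounds = envelope_bounds[of \<beta>, OF \<beta>(1)] and step = envelope_step[of \<beta>, OF \<beta>(1-3)]
  have "lattice_energy r W (envelope \<beta>) \<le> lattice_energy r W \<beta>"
  proof (rule lattice_energy_le_termwise)
    show "\<bar>envelope \<beta> (k+1) - envelope \<beta> k\<bar> \<le> \<bar>\<beta> (k+1) - \<beta> k\<bar>" for k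
      using step by blast
    show "W (envelope \<beta> k) \<le> W (\<beta> k)" for k
      using bounds hyp_H_le_abs[OF H] by blast
  qed
  moreover have "envelope \<beta> \<in> centered_profiles"
    unfolding centered_profiles_def
    using bounds[of "-1"] bounds[of 0] bounds envelope_joins_wells[OF \<beta>(1,4)] step
    by (auto intro: mono_intI)
  ultimately show ?thesis using le by (meson order_trans)
qed

lemma lattice_min_le: "hyp_H W \<Longrightarrow> joins_wells b \<Longrightarrow> lattice_min r W \<le> lattice_energy r W b"
  using exists_centered_profile_le[of W b r] unfolding lattice_min_def by (meson INF_lower2)

lemma lattice_energy_eq_top:
  assumes "infinite S" and "0 < \<delta>" and "\<And>k. k \<in> S \<Longrightarrow> \<delta> \<le> W (c k)"
  shows "lattice_energy r W c = \<infinity>"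
proof -
  have "ennreal \<delta> * emeasure (count_space UNIV) S = (\<integral>\<^sup>+k. ennreal \<delta> * indicator S k \<partial>count_space UNIV)"
    by (rule nn_integral_cmult_indicator[symmetric]) simp
  also have "\<dots> \<le> lattice_energy r W c"
    unfolding lattice_energy_def
  proof (intro nn_integral_mono)
    fix k :: int
    show "ennreal \<delta> * indicator S k \<le> ennreal (lattice_term r W c k)"
      using assms(3)[of k] by (cases "k \<in> S") (auto intro!: ennreal_leI simp: lattice_term_def add_increasing)
  qed
  finally show ?thesis
    using assms(1,2) by (simp add: emeasure_count_space_infinite ennreal_mult_top top_unique)
qed

text \<open>If \<open>c\<close> stayed below some \<open>t < 1\<close>, then \<open>W (c k) \<ge> W t > 0\<close> for all \<open>k \<ge> 0\<close>.\<close>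
lemma tendsto_one_if_lattice_energy_finite:
  assumes H: "hyp_H W" and "mono c" and "\<And>k. \<bar>c k\<bar> \<le> 1" and "0 \<le> c 0"
    and "lattice_energy r W c < \<infinity>"
  shows "(c \<longlongrightarrow> 1) at_top"
proof (rule order_tendstoI)
  fix y :: real assume y: "y < 1"
  show "\<forall>\<^sub>F k in at_top. y < c k"
  proof (cases "\<exists>k0. y < c k0")
    case True
    then obtain k0 where "y < c k0" by blast
    hence "\<forall>k\<ge>k0. y < c k" using monoD[OF assms(2)] by (meson less_le_trans)
    thus ?thesis by (auto simp: eventually_at_top_linorder)
  next
    case False
    define t where "t = max y 0"
    have t: "0 \<le> t" "t < 1" using y by (auto simp: t_def)
    have "lattice_energy r W c = \<infinity>"
    proof (rule lattice_energy_eq_top)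
      show "infinite (range int)" by (simp add: range_inj_infinite)
      show "0 < W t" using t by (intro hyp_H_pos[OF H]) auto
      fix k assume "k \<in> range int"
      hence "0 \<le> c k" using assms(2,4) by (auto dest: monoD[of c 0 k])
      moreover have "c k \<le> t" using False by (auto simp: t_def le_max_iff_disj not_less)
      ultimately show "W t \<le> W (c k)" using t by (intro hyp_H_le_abs[OF H]) auto
    qed
    thus ?thesis using assms(5) by simp
  qed
next
  fix y :: real assume "1 < y"
  hence "c k < y" for k using assms(3)[of k] by (simp add: abs_le_iff)
  thus "\<forall>\<^sub>F k in at_top. c k < y" by (simp add: always_eventually)
qed

lemma tendsto_minus_one_if_lattice_energy_finite:
  assumes H: "hyp_H W" and "mono c" and "\<And>k. \<bar>c k\<bar> \<le> 1" and "c (-1) \<le> 0"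
    and "lattice_energy r W c < \<infinity>"
  shows "(c \<longlongrightarrow> -1) at_bot"
proof (rule order_tendstoI)
  fix y :: real assume y: "-1 < y"
  show "\<forall>\<^sub>F k in at_bot. c k < y"
  proof (cases "\<exists>k0. c k0 < y")
    case True
    then obtain k0 where "c k0 < y" by blast
    hence "\<forall>k\<le>k0. c k < y" using monoD[OF assms(2)] by (meson le_less_trans)
    thus ?thesis by (auto simp: eventually_at_bot_linorder)
  next
    case False
    define t where "t = min y 0"
    have t: "t \<le> 0" "-1 < t" using y by (auto simp: t_def)
    have "lattice_energy r W c = \<infinity>"
    proof (rule lattice_energy_eq_top)
      show "infinite (range (\<lambda>n::nat. - int n - 1))" by (rule range_inj_infinite) (simp add: inj_def)
      show "0 < W t" using t by (intro hyp_H_pos[OF H]) auto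
      fix k assume "k \<in> range (\<lambda>n::nat. - int n - 1)"
      hence "c k \<le> 0" using assms(2,4) by (auto dest: monoD[of c k "-1"])
      moreover have "t \<le> c k" using False by (auto simp: t_def min_le_iff_disj not_less)
      ultimately show "W t \<le> W (c k)" using t by (intro hyp_H_le_abs[OF H]) auto
    qed
    thus ?thesis using assms(5) by simp
  qed
next
  fix y :: real assume "y < -1"
  hence "y < c k" for k using assms(3)[of k] by (simp add: abs_le_iff)
  thus "\<forall>\<^sub>F k in at_bot. y < c k" by (simp add: always_eventually)
qed

definition sign_profile :: "int \<Rightarrow> real" where
  "sign_profile k = (if k < 0 then -1 else 1)"

lemma sign_profile_centered: "sign_profile \<in> centered_profiles"
proof -
  have "(sign_profile \<longlongrightarrow> 1) at_top"
    by (rule tendsto_eventually) (use eventually_ge_at_top[of 0] in \<open>eventually_elim, simp add: sign_profile_def\<close>)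
  moreover have "(sign_profile \<longlongrightarrow> -1) at_bot"
    by (rule tendsto_eventually) (use eventually_le_at_bot[of "-1"] in \<open>eventually_elim, simp add: sign_profile_def\<close>)
  ultimately show ?thesis
    by (auto simp: centered_profiles_def joins_wells_def sign_profile_def mono_def)
qed

lemma lattice_energy_sign_profile:
  assumes H: "hyp_H W"
  shows "lattice_energy r W sign_profile = ennreal (2 / r\<^sup>2)"
proof -
  have "ennreal (lattice_term r W sign_profile k) = ennreal (2 / r\<^sup>2) * indicator {-1} k" for k
    using hyp_H_one[OF H] hyp_H_minus_one[OF H]
    by (cases "k = -1"; cases "k < -1") (auto simp: lattice_term_def sign_profile_def power2_eq_square)
  thus ?thesis
    unfolding lattice_energy_def by (simp add: nn_integral_cmult_indicator emeasure_count_space_finite)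
qed

lemma lattice_min_le_sign_profile: "hyp_H W \<Longrightarrow> lattice_min r W \<le> ennreal (2 / r\<^sup>2)"
  using INF_lower[OF sign_profile_centered, of "lattice_energy r W"]
  by (simp add: lattice_min_def lattice_energy_sign_profile)

lemma bounded_pointwise_convergent_subseq:
  fixes f :: "nat \<Rightarrow> 'a::countable \<Rightarrow> real"
  assumes bnd: "\<And>n x. \<bar>f n x\<bar> \<le> B"
  obtains d g where "strict_mono d" and "\<And>x. (\<lambda>j. f (d j) x) \<longlonglongrightarrow> g x"
proof -
  let ?P = "\<lambda>n s. convergent (\<lambda>j. f (s j) (from_nat n))"
  interpret diag: subseqs ?P
  proof (unfold convergent_def, unfold subseqs_def, auto)
    fix n :: nat and s :: "nat \<Rightarrow> nat" assume "strict_mono s"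
    have "(\<lambda>j. f (s j) (from_nat n)) j \<in> {-B..B}" for j using bnd[of "s j" "from_nat n"] by (simp add: abs_le_iff)
    then obtain l s' where "strict_mono s'" "((\<lambda>j. f (s j) (from_nat n)) \<circ> s') \<longlonglongrightarrow> l"
      using compact_Icc compact_imp_seq_compact seq_compactE by metis
    thus "\<exists>s'. strict_mono (s' :: nat \<Rightarrow> nat) \<and> (\<exists>l. (\<lambda>j. f (s (s' j)) (from_nat n)) \<longlonglongrightarrow> l)"
      by (auto simp: comp_def)
  qed
  have conv: "?P n diag.diagseq" for n
  proof -
    have "(\<lambda>j. f ((diag.seqseq (Suc n) \<circ> (\<lambda>j. diag.fold_reduce (Suc n) j (Suc n + j))) j) (from_nat n))
        = (\<lambda>j. f (diag.seqseq (Suc n) j) (from_nat n)) \<circ> (\<lambda>j. diag.fold_reduce (Suc n) j (Suc n + j))"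
      by auto
    note diag_comp = this
    have "?P n (diag.diagseq \<circ> ((+) (Suc n)))"
      unfolding diag.diagseq_seqseq diag_comp
      by (intro convergent_subseq_convergent diag.seqseq_holds diag.subseq_diagonal_rest)
    then obtain L where "(\<lambda>j. f (diag.diagseq (j + Suc n)) (from_nat n)) \<longlonglongrightarrow> L"
      by (auto simp: add.commute convergent_def comp_def)
    hence "(\<lambda>j. f (diag.diagseq j) (from_nat n)) \<longlonglongrightarrow> L" by (rule LIMSEQ_offset)
    thus ?thesis by (auto simp: convergent_def)
  qed
  show thesis
  proof
    show "strict_mono diag.diagseq" by (rule diag.subseq_diagseq)
    show "(\<lambda>j. f (diag.diagseq j) x) \<longlonglongrightarrow> lim (\<lambda>j. f (diag.diagseq j) x)" for x
      using conv[of "to_nat x"] by (simp add: convergent_LIMSEQ_iff)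
  qed
qed

lemma lattice_energy_le_liminf:
  assumes H: "hyp_H W" and r: "r > 0" and lim: "\<And>k. (\<lambda>j. c j k) \<longlonglongrightarrow> a k"
  shows "lattice_energy r W a \<le> liminf (\<lambda>j. lattice_energy r W (c j))"
proof -
  have "(\<lambda>j. ennreal (lattice_term r W (c j) k)) \<longlonglongrightarrow> ennreal (lattice_term r W a k)" for k
    unfolding lattice_term_def using r
    by (intro tendsto_ennrealI tendsto_intros lim isCont_tendsto_compose[OF hyp_H_isCont[OF H]]) simp
  hence "liminf (\<lambda>j. ennreal (lattice_term r W (c j) k)) = ennreal (lattice_term r W a k)" for k
    by (simp add: lim_imp_Liminf)
  hence "lattice_energy r W a = (\<integral>\<^sup>+k. liminf (\<lambda>j. ennreal (lattice_term r W (c j) k)) \<partial>count_space UNIV)"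
    unfolding lattice_energy_def by simp
  also have "\<dots> \<le> liminf (\<lambda>j. lattice_energy r W (c j))"
    unfolding lattice_energy_def by (rule nn_integral_liminf) (simp add: measurable_count_space_eq1)
  finally show ?thesis .
qed

lemma lattice_min_attained:
  assumes H: "hyp_H W" and r: "r > 0"
  obtains a where "a \<in> centered_profiles" and "lattice_energy r W a = lattice_min r W"
proof -
  have "lattice_energy r W ` centered_profiles \<noteq> {}" using sign_profile_centered by auto
  from Inf_as_limit[OF this] obtain e
    where e: "\<And>n. e n \<in> lattice_energy r W ` centered_profiles" "e \<longlonglongrightarrow> lattice_min r W"
    unfolding lattice_min_def by blast
  have "\<forall>n. \<exists>c. c \<in> centered_profiles \<and> lattice_energy r W c = e n" using e(1) by (metis imageE)
  then obtain c where c: "\<And>n. c n \<in> centered_profiles" "\<And>n. lattice_energy r W (c n) = e n"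
    by metis
  have "\<bar>c n k\<bar> \<le> 1" for n k using c(1)[of n] by (auto simp: centered_profiles_def)
  then obtain d a where d: "strict_mono d" and lim: "\<And>k. (\<lambda>j. c (d j) k) \<longlonglongrightarrow> a k"
    using bounded_pointwise_convergent_subseq[of c 1] by blast
  have "(\<lambda>j. lattice_energy r W (c (d j))) \<longlonglongrightarrow> lattice_min r W"
    using LIMSEQ_subseq_LIMSEQ[OF e(2) d] c(2) by (simp add: comp_def)
  hence min: "lattice_energy r W a \<le> lattice_min r W"
    using lattice_energy_le_liminf[of W r "\<lambda>j. c (d j)" a, OF H r lim] by (simp add: lim_imp_Liminf)
  have "mono a"
    by (intro monoI LIMSEQ_le[OF lim lim]) (use c(1) in \<open>auto simp: centered_profiles_def dest: monoD\<close>)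
  moreover have "\<bar>a k\<bar> \<le> 1" for k
    using c(1) by (intro LIMSEQ_le_const2[OF tendsto_rabs[OF lim]]) (auto simp: centered_profiles_def)
  moreover have "a (-1) \<le> 0" using c(1) by (intro LIMSEQ_le_const2[OF lim]) (auto simp: centered_profiles_def)
  moreover have "0 \<le> a 0" using c(1) by (intro LIMSEQ_le_const[OF lim]) (auto simp: centered_profiles_def)
  moreover have "lattice_energy r W a < \<infinity>"
    using min lattice_min_le_sign_profile[OF H, of r] by (simp add: top.not_eq_extremum le_less_trans)
  ultimately have "a \<in> centered_profiles"
    using tendsto_one_if_lattice_energy_finite[OF H, of a r] tendsto_minus_one_if_lattice_energy_finite[OF H, of a r]
    by (simp add: centered_profiles_def joins_wells_def)
  moreover from this have "lattice_min r W \<le> lattice_energy r W a"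
    unfolding lattice_min_def by (rule INF_lower)
  ultimately show thesis using min that by simp
qed

section \<open>Essential supremum and infimum on open intervals\<close>

lemma not_AE_False_on_interval:
  assumes "c < (d::real)"
  shows "\<not> (AE x in lebesgue. x \<in> {c<..<d} \<longrightarrow> False)"
proof
  assume "AE x in lebesgue. x \<in> {c<..<d} \<longrightarrow> False"
  hence "{c<..<d} \<in> null_sets lborel" by (simp add: AE_completion_iff AE_iff_null_sets)
  thus False using assms by (auto simp: null_sets_def)
qed

lemma le_of_le_add_inverse_Suc:
  fixes a b :: real
  assumes "\<And>n. a \<le> b + 1 / Suc n"
  shows "a \<le> b"
proof (rule ccontr)
  assume "\<not> a \<le> b"
  then obtain n where "inverse (real (Suc n)) < a - b"
    using reals_Archimedean[of "a - b"] by auto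
  thus False using assms[of n] by (simp add: field_simps)
qed

context
  fixes c d C :: real and u :: "real \<Rightarrow> real"
  assumes cd: "c < d" and bnd: "AE x in lebesgue. x \<in> {c<..<d} \<longrightarrow> \<bar>u x\<bar> \<le> C"
begin

lemma ess_sup_on_bounds:
  "C \<in> {z. AE x in lebesgue. x \<in> {c<..<d} \<longrightarrow> u x \<le> z}"
  "bdd_below {z. AE x in lebesgue. x \<in> {c<..<d} \<longrightarrow> u x \<le> z}"
proof -
  have "- C \<le> z" if "AE x in lebesgue. x \<in> {c<..<d} \<longrightarrow> u x \<le> z" for z
  proof (rule ccontr)
    assume "\<not> - C \<le> z"
    have "AE x in lebesgue. x \<in> {c<..<d} \<longrightarrow> False"
      using bnd that by eventually_elim (use \<open>\<not> - C \<le> z\<close> in auto)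
    thus False using not_AE_False_on_interval[OF cd] by blast
  qed
  thus "C \<in> {z. AE x in lebesgue. x \<in> {c<..<d} \<longrightarrow> u x \<le> z}"
    "bdd_below {z. AE x in lebesgue. x \<in> {c<..<d} \<longrightarrow> u x \<le> z}"
    using bnd by (auto simp: bdd_below_def abs_le_iff elim: eventually_mono)
qed

lemma ess_inf_on_bounds:
  "-C \<in> {z. AE x in lebesgue. x \<in> {c<..<d} \<longrightarrow> z \<le> u x}"
  "bdd_above {z. AE x in lebesgue. x \<in> {c<..<d} \<longrightarrow> z \<le> u x}"
proof -
  have "z \<le> C" if "AE x in lebesgue. x \<in> {c<..<d} \<longrightarrow> z \<le> u x" for z
  proof (rule ccontr)
    assume "\<not> z \<le> C"
    have "AE x in lebesgue. x \<in> {c<..<d} \<longrightarrow> False"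
      using bnd that by eventually_elim (use \<open>\<not> z \<le> C\<close> in auto)
    thus False using not_AE_False_on_interval[OF cd] by blast
  qed
  thus "-C \<in> {z. AE x in lebesgue. x \<in> {c<..<d} \<longrightarrow> z \<le> u x}"
    "bdd_above {z. AE x in lebesgue. x \<in> {c<..<d} \<longrightarrow> z \<le> u x}"
    using bnd by (auto simp: bdd_above_def abs_le_iff elim: eventually_mono)
qed

lemma ess_sup_on_le:
  assumes "AE x in lebesgue. x \<in> {c<..<d} \<longrightarrow> u x \<le> z"
  shows "ess_sup_on {c<..<d} u \<le> z"
  unfolding ess_sup_on_def using assms ess_sup_on_bounds by (intro cInf_lower) auto

lemma le_ess_inf_on:
  assumes "AE x in lebesgue. x \<in> {c<..<d} \<longrightarrow> z \<le> u x"
  shows "z \<le> ess_inf_on {c<..<d} u"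
  unfolding ess_inf_on_def using assms ess_inf_on_bounds by (intro cSup_upper) auto

lemma AE_le_ess_sup_on: "AE x in lebesgue. x \<in> {c<..<d} \<longrightarrow> u x \<le> ess_sup_on {c<..<d} u"
proof -
  let ?S = "{z. AE x in lebesgue. x \<in> {c<..<d} \<longrightarrow> u x \<le> z}"
  have "AE x in lebesgue. x \<in> {c<..<d} \<longrightarrow> u x \<le> Inf ?S + 1 / Suc n" for n
  proof -
    have "Inf ?S < Inf ?S + 1 / Suc n" by simp
    then obtain z where "z \<in> ?S" "z < Inf ?S + 1 / Suc n"
      using cInf_less_iff[of ?S] ess_sup_on_bounds by blast
    thus ?thesis by (auto elim: eventually_mono)
  qed
  hence "AE x in lebesgue. \<forall>n. x \<in> {c<..<d} \<longrightarrow> u x \<le> Inf ?S + 1 / Suc n"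
    by (simp only: AE_all_countable) blast
  thus ?thesis unfolding ess_sup_on_def by eventually_elim (auto intro: le_of_le_add_inverse_Suc)
qed

lemma AE_ess_inf_on_le: "AE x in lebesgue. x \<in> {c<..<d} \<longrightarrow> ess_inf_on {c<..<d} u \<le> u x"
proof -
  let ?S = "{z. AE x in lebesgue. x \<in> {c<..<d} \<longrightarrow> z \<le> u x}"
  have "AE x in lebesgue. x \<in> {c<..<d} \<longrightarrow> Sup ?S - 1 / Suc n \<le> u x" for n
  proof -
    have "Sup ?S - 1 / Suc n < Sup ?S" by simp
    then obtain z where "z \<in> ?S" "Sup ?S - 1 / Suc n < z"
      using less_cSup_iff[of ?S] ess_inf_on_bounds by blast
    thus ?thesis by (auto elim: eventually_mono)
  qed
  hence "AE x in lebesgue. \<forall>n. x \<in> {c<..<d} \<longrightarrow> Sup ?S - 1 / Suc n \<le> u x"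
    by (simp only: AE_all_countable) blast
  thus ?thesis unfolding ess_inf_on_def
    by eventually_elim (auto intro: le_of_le_add_inverse_Suc simp: algebra_simps)
qed

lemma le_ess_sup_on:
  assumes "AE x in lebesgue. x \<in> {c<..<d} \<longrightarrow> z \<le> u x"
  shows "z \<le> ess_sup_on {c<..<d} u"
proof (rule ccontr)
  assume nt: "\<not> ?thesis"
  have "AE x in lebesgue. x \<in> {c<..<d} \<longrightarrow> False"
    using assms AE_le_ess_sup_on by eventually_elim (use nt in auto)
  thus False using not_AE_False_on_interval[OF cd] by blast
qed

lemma ess_inf_on_le:
  assumes "AE x in lebesgue. x \<in> {c<..<d} \<longrightarrow> u x \<le> z"
  shows "ess_inf_on {c<..<d} u \<le> z"
proof (rule ccontr)
  assume nt: "\<not> ?thesis"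
  have "AE x in lebesgue. x \<in> {c<..<d} \<longrightarrow> False"
    using assms AE_ess_inf_on_le by eventually_elim (use nt in auto)
  thus False using not_AE_False_on_interval[OF cd] by blast
qed

end

lemma osc_on_cong:
  assumes "AE x in lebesgue. x \<in> I \<longrightarrow> u x = v x"
  shows "osc_on I u = osc_on I v"
proof -
  have "{z. AE x in lebesgue. x \<in> I \<longrightarrow> P z (u x)} = {z. AE x in lebesgue. x \<in> I \<longrightarrow> P z (v x)}"
    for P :: "real \<Rightarrow> real \<Rightarrow> bool"
  proof (intro set_eqI iffI; simp)
    fix z
    assume "AE x in lebesgue. x \<in> I \<longrightarrow> P z (u x)"
    thus "AE x in lebesgue. x \<in> I \<longrightarrow> P z (v x)" using assms by eventually_elim auto
  next
    fix z
    assume "AE x in lebesgue. x \<in> I \<longrightarrow> P z (v x)"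
    thus "AE x in lebesgue. x \<in> I \<longrightarrow> P z (u x)" using assms by eventually_elim auto
  qed
  from this[of "\<lambda>z y. y \<le> z"] this[of "\<lambda>z y. z \<le> y"] show ?thesis
    by (simp add: osc_on_def ess_sup_on_def ess_inf_on_def)
qed

lemma Linf_loc_AE_bounded:
  assumes "Linf_loc u"
  obtains C where "AE x in lebesgue. x \<in> {c<..<d} \<longrightarrow> \<bar>u x\<bar> \<le> C"
proof -
  obtain C where C: "AE x in lebesgue. x \<in> {c..d} \<longrightarrow> \<bar>u x\<bar> \<le> C"
    using assms unfolding Linf_loc_def by blast
  show thesis by (rule that[of C]) (use C in \<open>auto elim: eventually_mono\<close>)
qed

lemma Linf_imp_Linf_loc: "Linf u \<Longrightarrow> Linf_loc u"
  unfolding Linf_def Linf_loc_def by (auto elim: eventually_mono)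

definition ess_regular_point :: "(real \<Rightarrow> real) \<Rightarrow> real \<Rightarrow> bool" where
  "ess_regular_point u y \<longleftrightarrow> (\<forall>p\<in>\<rat>. \<forall>q\<in>\<rat>. p < y \<and> y < q \<longrightarrow>
      ess_inf_on {p<..<q} u \<le> u y \<and> u y \<le> ess_sup_on {p<..<q} u)"

lemma AE_ess_regular_point:
  assumes "Linf_loc u"
  shows "AE y in lebesgue. ess_regular_point u y"
proof -
  have "AE y in lebesgue. p < y \<and> y < q \<longrightarrow> ess_inf_on {p<..<q} u \<le> u y \<and> u y \<le> ess_sup_on {p<..<q} u"
    for p q
  proof (cases "p < q")
    case True
    obtain C where C: "AE x in lebesgue. x \<in> {p<..<q} \<longrightarrow> \<bar>u x\<bar> \<le> C"
      using Linf_loc_AE_bounded[OF assms] by blast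
    show ?thesis using AE_le_ess_sup_on[OF True C] AE_ess_inf_on_le[OF True C] by eventually_elim auto
  qed auto
  thus ?thesis unfolding ess_regular_point_def by (simp add: AE_ball_countable[OF countable_rat])
qed

lemma ess_regular_point_between:
  assumes L: "Linf_loc u" and y: "ess_regular_point u y" "c < y" "y < d"
  shows "ess_inf_on {c<..<d} u \<le> u y \<and> u y \<le> ess_sup_on {c<..<d} u"
proof -
  obtain p where p: "p \<in> \<rat>" "c < p" "p < y" using Rats_dense_in_real[OF y(2)] by blast
  obtain q where q: "q \<in> \<rat>" "y < q" "q < d" using Rats_dense_in_real[OF y(3)] by blast
  have cd: "c < d" "p < q" using p q by auto
  obtain C where C: "AE x in lebesgue. x \<in> {c<..<d} \<longrightarrow> \<bar>u x\<bar> \<le> C" using Linf_loc_AE_bounded[OF L] .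
  obtain C' where C': "AE x in lebesgue. x \<in> {p<..<q} \<longrightarrow> \<bar>u x\<bar> \<le> C'" using Linf_loc_AE_bounded[OF L] .
  have "ess_sup_on {p<..<q} u \<le> ess_sup_on {c<..<d} u"
    using AE_le_ess_sup_on[OF cd(1) C] p q by (intro ess_sup_on_le[OF cd(2) C']) (auto elim: eventually_mono)
  moreover have "ess_inf_on {c<..<d} u \<le> ess_inf_on {p<..<q} u"
    using AE_ess_inf_on_le[OF cd(1) C] p q by (intro le_ess_inf_on[OF cd(2) C']) (auto elim: eventually_mono)
  moreover have "ess_inf_on {p<..<q} u \<le> u y \<and> u y \<le> ess_sup_on {p<..<q} u"
    using y p q unfolding ess_regular_point_def by blast
  ultimately show ?thesis by linarith
qed

lemma abs_diff_le_osc_on: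
  assumes "Linf_loc u" and "ess_regular_point u y" "ess_regular_point u z"
    and "c < y" "y < d" "c < z" "z < d"
  shows "\<bar>u y - u z\<bar> \<le> osc_on {c<..<d} u"
  using ess_regular_point_between[OF assms(1,2,4,5)] ess_regular_point_between[OF assms(1,3,6,7)]
  unfolding osc_on_def by linarith

section \<open>Integration on the real line\<close>

lemma AE_lebesgue_translate:
  assumes "AE x in lebesgue. P x"
  shows "AE x in lebesgue. P (x + c)"
proof -
  obtain N where N: "negligible N" "{x. \<not> P x} \<subseteq> N"
    using assms eventually_ae_filter_negligible by blast
  have "{x. \<not> P (x + c)} \<subseteq> (+) (-c) ` N"
    using N(2) by (auto intro!: image_eqI[of _ _ "_ + c"])
  thus ?thesis using negligible_translation[OF N(1)] eventually_ae_filter_negligible by blast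
qed

lemma floor_divide_eq_iff:
  fixes h x :: real
  assumes "h > 0"
  shows "k = \<lfloor>x / h\<rfloor> \<longleftrightarrow> h * of_int k \<le> x \<and> x < h * of_int k + h"
proof -
  have "h * of_int k \<le> x \<longleftrightarrow> of_int k \<le> x / h" using assms by (simp add: pos_le_divide_eq mult.commute)
  moreover have "x < h * of_int k + h \<longleftrightarrow> x / h < of_int k + 1"
    using assms by (simp add: pos_divide_less_eq algebra_simps)
  ultimately show ?thesis by (metis floor_eq_iff)
qed

lemma nn_integral_lborel_periodize:
  fixes f :: "real \<Rightarrow> ennreal"
  assumes f: "f \<in> borel_measurable borel" and h: "h > 0"
  shows "(\<integral>\<^sup>+x. f x \<partial>lborel) =
    (\<integral>\<^sup>+t. indicator {0..<h} t * (\<integral>\<^sup>+k. f (t + h * of_int k) \<partial>count_space UNIV) \<partial>lborel)"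
proof -
  let ?cell = "\<lambda>k::int. {h * of_int k..<h * of_int k + h}"
  have cell: "(\<integral>\<^sup>+t. indicator {0..<h} t * f (t + h * of_int k) \<partial>lborel) =
     (\<integral>\<^sup>+x. indicator (?cell k) x * f x \<partial>lborel)" for k
  proof -
    have "(\<integral>\<^sup>+x. indicator (?cell k) x * f x \<partial>lborel) =
      ennreal \<bar>1\<bar> * (\<integral>\<^sup>+x. indicator (?cell k) (h * of_int k + 1 * x) * f (h * of_int k + 1 * x) \<partial>lborel)"
      using f by (intro nn_integral_real_affine) auto
    also have "\<dots> = (\<integral>\<^sup>+t. indicator {0..<h} t * f (t + h * of_int k) \<partial>lborel)"
      by (simp, intro nn_integral_cong) (auto simp: indicator_def add.commute)
    finally show ?thesis by simp
  qed
  have one_cell: "(\<integral>\<^sup>+k. indicator (?cell k) x * f x \<partial>count_space UNIV) = f x" for x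
  proof -
    have "(\<lambda>k. indicator (?cell k) x * f x) = (\<lambda>k. f x * indicator {\<lfloor>x / h\<rfloor>} k)"
      using floor_divide_eq_iff[OF h] by (auto simp: indicator_def fun_eq_iff)
    thus ?thesis by (simp add: nn_integral_cmult_indicator emeasure_count_space_finite)
  qed
  have "(\<integral>\<^sup>+t. indicator {0..<h} t * (\<integral>\<^sup>+k. f (t + h * of_int k) \<partial>count_space UNIV) \<partial>lborel) =
     (\<integral>\<^sup>+t. (\<integral>\<^sup>+k. indicator {0..<h} t * f (t + h * of_int k) \<partial>count_space UNIV) \<partial>lborel)"
    by (intro nn_integral_cong) (simp add: nn_integral_cmult)
  also have "\<dots> = (\<integral>\<^sup>+k. (\<integral>\<^sup>+t. indicator {0..<h} t * f (t + h * of_int k) \<partial>lborel) \<partial>count_space UNIV)"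
    using f by (intro nn_integral_count_space_nn_integral) auto
  also have "\<dots> = (\<integral>\<^sup>+k. (\<integral>\<^sup>+x. indicator (?cell k) x * f x \<partial>lborel) \<partial>count_space UNIV)"
    by (simp only: cell)
  also have "\<dots> = (\<integral>\<^sup>+x. (\<integral>\<^sup>+k. indicator (?cell k) x * f x \<partial>count_space UNIV) \<partial>lborel)"
    using f by (intro nn_integral_count_space_nn_integral[symmetric]) auto
  finally show ?thesis by (simp add: one_cell)
qed

lemma nn_integral_lborel_floor:
  fixes \<psi> :: "int \<Rightarrow> ennreal"
  assumes h: "h > 0"
  shows "(\<integral>\<^sup>+x. \<psi> \<lfloor>x / h\<rfloor> \<partial>lborel) = ennreal h * (\<integral>\<^sup>+k. \<psi> k \<partial>count_space UNIV)"
proof -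
  have m: "(\<lambda>x. \<psi> \<lfloor>x / h\<rfloor>) \<in> borel_measurable borel" by measurable
  have fl: "\<lfloor>(t + h * of_int k) / h\<rfloor> = k" if "t \<in> {0..<h}" for t k
    using floor_divide_eq_iff[OF h, of k "t + h * of_int k"] that by auto
  have "(\<integral>\<^sup>+x. \<psi> \<lfloor>x / h\<rfloor> \<partial>lborel) =
     (\<integral>\<^sup>+t. indicator {0..<h} t * (\<integral>\<^sup>+k. \<psi> \<lfloor>(t + h * of_int k) / h\<rfloor> \<partial>count_space UNIV) \<partial>lborel)"
    by (rule nn_integral_lborel_periodize[OF m h])
  also have "\<dots> = (\<integral>\<^sup>+t. (\<integral>\<^sup>+k. \<psi> k \<partial>count_space UNIV) * indicator {0..<h} t \<partial>lborel)"
    by (intro nn_integral_cong) (auto simp: indicator_def fl)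
  finally show ?thesis using h by (simp add: nn_integral_cmult_indicator mult.commute)
qed

lemma nn_integral_superadd:
  "(\<integral>\<^sup>+x. f x \<partial>M) + (\<integral>\<^sup>+x. g x \<partial>M) \<le> (\<integral>\<^sup>+x. f x + g x \<partial>M)"
proof -
  let ?G = "\<lambda>f. {s. simple_function M s \<and> s \<le> f}"
  have pair: "integral\<^sup>S M s1 + integral\<^sup>S M s2 \<le> (\<integral>\<^sup>+x. f x + g x \<partial>M)"
    if s1: "s1 \<in> ?G f" and s2: "s2 \<in> ?G g" for s1 s2
  proof -
    have "integral\<^sup>S M s1 + integral\<^sup>S M s2 = integral\<^sup>S M (\<lambda>x. s1 x + s2 x)"
      using s1 s2 by (simp add: simple_integral_add)
    also have "\<dots> \<le> (\<integral>\<^sup>+x. f x + g x \<partial>M)"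
      unfolding nn_integral_def using s1 s2
      by (intro SUP_upper) (auto intro: simple_function_add add_mono simp: le_fun_def)
    finally show ?thesis .
  qed
  have ne: "?G k \<noteq> {}" for k :: "'a \<Rightarrow> ennreal"
  proof -
    have "(\<lambda>x. 0) \<in> ?G k" by (simp add: le_fun_def)
    thus ?thesis by blast
  qed
  have step: "integral\<^sup>S M s1 + (\<integral>\<^sup>+x. g x \<partial>M) \<le> (\<integral>\<^sup>+x. f x + g x \<partial>M)" if s1: "s1 \<in> ?G f" for s1
  proof -
    have "integral\<^sup>S M s1 + (\<integral>\<^sup>+x. g x \<partial>M) = (SUP s2\<in>?G g. integral\<^sup>S M s1 + integral\<^sup>S M s2)"
      unfolding nn_integral_def[of M g] by (rule ennreal_SUP_add_right[OF ne])
    also have "\<dots> \<le> (\<integral>\<^sup>+x. f x + g x \<partial>M)"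
      using that by (intro SUP_least) (rule pair)
    finally show ?thesis .
  qed
  have "(\<integral>\<^sup>+x. f x \<partial>M) + (\<integral>\<^sup>+x. g x \<partial>M) = (SUP s1\<in>?G f. integral\<^sup>S M s1 + (\<integral>\<^sup>+x. g x \<partial>M))"
    unfolding nn_integral_def[of M f] by (rule ennreal_SUP_add_left[OF ne, symmetric])
  also have "\<dots> \<le> (\<integral>\<^sup>+x. f x + g x \<partial>M)" by (intro SUP_least step)
  finally show ?thesis .
qed

lemma nn_integral_le_split:
  assumes A: "A \<in> sets M"
  shows "(\<integral>\<^sup>+x. f x \<partial>M) \<le> (\<integral>\<^sup>+x. indicator A x * f x \<partial>M) + (\<integral>\<^sup>+x. indicator (- A) x * f x \<partial>M)"
proof -
  have "integral\<^sup>S M s \<le> (\<integral>\<^sup>+x. indicator A x * f x \<partial>M) + (\<integral>\<^sup>+x. indicator (- A) x * f x \<partial>M)"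
    if s: "simple_function M s" "s \<le> f" for s
  proof -
    have [measurable]: "s \<in> borel_measurable M" "A \<in> sets M"
      using s(1) A by (auto intro: borel_measurable_simple_function)
    have "integral\<^sup>S M s = (\<integral>\<^sup>+x. indicator A x * s x + indicator (- A) x * s x \<partial>M)"
      using s by (auto simp: nn_integral_eq_simple_integral[symmetric] indicator_def intro!: nn_integral_cong)
    also have "\<dots> = (\<integral>\<^sup>+x. indicator A x * s x \<partial>M) + (\<integral>\<^sup>+x. indicator (- A) x * s x \<partial>M)"
      by (rule nn_integral_add) measurable
    also have "\<dots> \<le> (\<integral>\<^sup>+x. indicator A x * f x \<partial>M) + (\<integral>\<^sup>+x. indicator (- A) x * f x \<partial>M)"
      using s(2) by (intro add_mono nn_integral_mono) (auto simp: le_fun_def intro: mult_left_mono)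
    finally show ?thesis .
  qed
  thus ?thesis unfolding nn_integral_def[of M f] by (auto intro!: SUP_least)
qed

lemma nn_integral_split:
  assumes "A \<in> sets M"
  shows "(\<integral>\<^sup>+x. f x \<partial>M) = (\<integral>\<^sup>+x. indicator A x * f x \<partial>M) + (\<integral>\<^sup>+x. indicator (- A) x * f x \<partial>M)"
proof (rule antisym)
  have "(\<integral>\<^sup>+x. indicator A x * f x \<partial>M) + (\<integral>\<^sup>+x. indicator (- A) x * f x \<partial>M) \<le>
      (\<integral>\<^sup>+x. indicator A x * f x + indicator (- A) x * f x \<partial>M)" by (rule nn_integral_superadd)
  also have "\<dots> = (\<integral>\<^sup>+x. f x \<partial>M)" by (intro nn_integral_cong) (auto simp: indicator_def)
  finally show "(\<integral>\<^sup>+x. indicator A x * f x \<partial>M) + (\<integral>\<^sup>+x. indicator (- A) x * f x \<partial>M) \<le> (\<integral>\<^sup>+x. f x \<partial>M)" .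
qed (rule nn_integral_le_split[OF assms])

section \<open>Lower bound by the lattice problem\<close>

lemma energy_lborel:
  "energy r W u = (\<integral>\<^sup>+x. ennreal ((osc_on {x-r<..<x+r} u)\<^sup>2 / (2 * r\<^sup>2)) \<partial>lborel)
     + (\<integral>\<^sup>+x. ennreal (W (u x)) \<partial>lborel)"
  unfolding energy_def by (simp add: nn_integral_completion)

lemma energy_AE_cong:
  assumes "AE x in lebesgue. u x = v x"
  shows "energy r W u = energy r W v"
proof -
  have "osc_on {x-r<..<x+r} u = osc_on {x-r<..<x+r} v" for x
    using assms by (intro osc_on_cong) (auto elim: eventually_mono)
  moreover have "(\<integral>\<^sup>+x. ennreal (W (u x)) \<partial>lebesgue) = (\<integral>\<^sup>+x. ennreal (W (v x)) \<partial>lebesgue)"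
    using assms by (intro nn_integral_cong_AE) (auto elim: eventually_mono)
  ultimately show ?thesis unfolding energy_def by simp
qed

text \<open>Both \<open>x \<plusminus> h/2\<close> lie in the window \<open>(x - r, x + r)\<close>.\<close>
lemma nn_integral_jump_le_osc:
  assumes r: "r > 0" and L: "Linf_loc w" and wm: "w \<in> borel_measurable borel"
    and h: "0 < h" "h < 2 * r"
  shows "(\<integral>\<^sup>+x. ennreal ((w (x + h) - w x)\<^sup>2 / (2 * r\<^sup>2)) \<partial>lborel)
         \<le> (\<integral>\<^sup>+x. ennreal ((osc_on {x-r<..<x+r} w)\<^sup>2 / (2 * r\<^sup>2)) \<partial>lborel)"
proof -
  define D where "D x = ennreal ((w (x + h) - w x)\<^sup>2 / (2 * r\<^sup>2))" for x
  have [measurable]: "D \<in> borel_measurable borel" unfolding D_def using wm by measurable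
  have "AE x in lebesgue. ess_regular_point w (x + h/2)" "AE x in lebesgue. ess_regular_point w (x + - h/2)"
    by (rule AE_lebesgue_translate[OF AE_ess_regular_point[OF L]])+
  hence "AE x in lebesgue. D (x - h/2) \<le> ennreal ((osc_on {x-r<..<x+r} w)\<^sup>2 / (2 * r\<^sup>2))"
  proof eventually_elim
    case (elim x)
    have ob: "\<bar>w (x + h/2) - w (x + - h/2)\<bar> \<le> osc_on {x-r<..<x+r} w"
      using h by (intro abs_diff_le_osc_on[OF L elim]) auto
    have "(w (x + h/2) - w (x + - h/2))\<^sup>2 \<le> (osc_on {x-r<..<x+r} w)\<^sup>2"
      using power_mono[OF ob abs_ge_zero, of 2] by simp
    moreover have "D (x - h/2) = ennreal ((w (x + h/2) - w (x + - h/2))\<^sup>2 / (2 * r\<^sup>2))"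
      unfolding D_def by (simp add: algebra_simps)
    ultimately show ?case using r by (auto intro!: ennreal_leI divide_right_mono)
  qed
  hence "(\<integral>\<^sup>+x. D (x - h/2) \<partial>lborel) \<le> (\<integral>\<^sup>+x. ennreal ((osc_on {x-r<..<x+r} w)\<^sup>2 / (2 * r\<^sup>2)) \<partial>lborel)"
    by (intro nn_integral_mono_AE) (simp add: AE_completion_iff)
  moreover have "(\<integral>\<^sup>+x. D (x - h/2) \<partial>lborel) = (\<integral>\<^sup>+x. D x \<partial>lborel)"
    using nn_integral_real_affine[of D 1 "- h/2"] by simp
  ultimately show ?thesis by (simp add: D_def)
qed

lemma lattice_min_le_energy_scaled:
  assumes H: "hyp_H W" and r: "r > 0" and L: "Linf_loc w" and wm: "w \<in> borel_measurable borel"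
    and h: "0 < h" "h < 2 * r"
    and joins: "AE t in lebesgue. joins_wells (\<lambda>k. w (t + h * of_int k))"
  shows "ennreal h * lattice_min r W \<le> energy r W w"
proof -
  note [measurable] = wm hyp_H_borel_measurable[OF H]
  define \<Phi> where "\<Phi> y = (w (y + h) - w y)\<^sup>2 / (2 * r\<^sup>2) + W (w y)" for y
  have \<Phi>_meas: "(\<lambda>y. ennreal (\<Phi> y)) \<in> borel_measurable borel" unfolding \<Phi>_def by measurable
  have "ennreal h * lattice_min r W = (\<integral>\<^sup>+t. lattice_min r W * indicator {0..<h} t \<partial>lborel)"
    using h by (simp add: nn_integral_cmult_indicator mult.commute)
  also have "\<dots> \<le> (\<integral>\<^sup>+t. indicator {0..<h} t * lattice_energy r W (\<lambda>k. w (t + h * of_int k)) \<partial>lborel)"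
  proof (intro nn_integral_mono_AE)
    show "AE t in lborel. lattice_min r W * indicator {0..<h} t
            \<le> indicator {0..<h} t * lattice_energy r W (\<lambda>k. w (t + h * of_int k))"
      using joins unfolding AE_completion_iff
      by eventually_elim (auto simp: indicator_def lattice_min_le[OF H])
  qed
  also have "\<dots> = (\<integral>\<^sup>+y. ennreal (\<Phi> y) \<partial>lborel)"
  proof -
    have sample: "lattice_energy r W (\<lambda>k. w (t + h * of_int k))
        = (\<integral>\<^sup>+k. ennreal (\<Phi> (t + h * of_int k)) \<partial>count_space UNIV)" for t
      unfolding lattice_energy_def lattice_term_def \<Phi>_def by (simp add: algebra_simps)
    show ?thesis unfolding sample by (rule nn_integral_lborel_periodize[OF \<Phi>_meas h(1), symmetric])
  qed
  also have "\<dots> = (\<integral>\<^sup>+y. ennreal ((w (y + h) - w y)\<^sup>2 / (2 * r\<^sup>2)) \<partial>lborel) + (\<integral>\<^sup>+y. ennreal (W (w y)) \<partial>lborel)"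
  proof -
    have "ennreal (\<Phi> y) = ennreal ((w (y + h) - w y)\<^sup>2 / (2 * r\<^sup>2)) + ennreal (W (w y))" for y
      using hyp_H_nonneg[OF H] unfolding \<Phi>_def by (simp add: ennreal_plus)
    hence "(\<integral>\<^sup>+y. ennreal (\<Phi> y) \<partial>lborel)
        = (\<integral>\<^sup>+y. ennreal ((w (y + h) - w y)\<^sup>2 / (2 * r\<^sup>2)) + ennreal (W (w y)) \<partial>lborel)"
      by (simp only:)
    also have "\<dots> = (\<integral>\<^sup>+y. ennreal ((w (y + h) - w y)\<^sup>2 / (2 * r\<^sup>2)) \<partial>lborel) + (\<integral>\<^sup>+y. ennreal (W (w y)) \<partial>lborel)"
      by (rule nn_integral_add) measurable
    finally show ?thesis .
  qed
  also have "\<dots> \<le> energy r W w"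
    unfolding energy_lborel using nn_integral_jump_le_osc[OF r L wm h] by (rule add_right_mono)
  finally show ?thesis .
qed

lemma ennreal_mult_le_of_forall_less:
  fixes m E :: ennreal and a :: real
  assumes "a > 0" and "m \<noteq> \<infinity>" and le: "\<And>h. 0 < h \<Longrightarrow> h < a \<Longrightarrow> ennreal h * m \<le> E"
  shows "ennreal a * m \<le> E"
proof (cases E)
  case (real e)
  obtain m' where m': "m = ennreal m'" "0 \<le> m'" using assms(2) by (cases m) auto
  have hm: "h * m' \<le> e" if "0 < h" "h < a" for h
    using le[OF that] m' that real by (simp add: ennreal_mult''[symmetric] ennreal_le_iff)
  have "a * m' \<le> e"
  proof (cases "m' = 0")
    case False
    hence "m' > 0" using m' by simp
    show ?thesis
    proof (rule dense_le_bounded[of 0])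
      show "0 < a * m'" using assms(1) \<open>m' > 0\<close> by simp
      fix z assume "0 < z" "z < a * m'"
      hence "z / m' * m' \<le> e" using \<open>m' > 0\<close> by (intro hm) (auto simp: field_simps)
      thus "z \<le> e" using \<open>m' > 0\<close> by simp
    qed
  qed (use real in simp)
  thus ?thesis using m' real assms(1) by (simp add: ennreal_mult''[symmetric])
qed simp

lemma lattice_min_le_energy:
  assumes H: "hyp_H W" and r: "r > 0" and fin: "lattice_min r W \<noteq> \<infinity>" and L: "Linf_loc v"
    and joins: "\<And>h. 0 < h \<Longrightarrow> AE t in lebesgue. joins_wells (\<lambda>k. v (t + h * of_int k))"
  shows "ennreal (2 * r) * lattice_min r W \<le> energy r W v"
proof -
  obtain w where wm: "w \<in> borel_measurable lborel" and vw: "AE x in lborel. v x = w x"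
    using completion_ex_borel_measurable_real L unfolding Linf_loc_def by blast
  have vw': "AE x in lebesgue. v x = w x" using vw by (simp add: AE_completion_iff)
  have Lw: "Linf_loc w"
    unfolding Linf_loc_def
  proof (intro conjI allI)
    show "w \<in> borel_measurable lebesgue" using wm by (rule measurable_completion)
    fix c d :: real
    obtain C where "AE x in lebesgue. x \<in> {c..d} \<longrightarrow> \<bar>v x\<bar> \<le> C" using L unfolding Linf_loc_def by blast
    thus "\<exists>C. AE x in lebesgue. x \<in> {c..d} \<longrightarrow> \<bar>w x\<bar> \<le> C"
      using vw' by (intro exI[of _ C]) (auto elim: eventually_mono)
  qed
  have scaled: "ennreal h * lattice_min r W \<le> energy r W w" if h: "0 < h" "h < 2 * r" for h
  proof (rule lattice_min_le_energy_scaled[OF H r Lw _ h])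
    show "w \<in> borel_measurable borel" using wm by (simp add: measurable_lborel2)
    have "AE t in lebesgue. \<forall>k::int. v (t + h * of_int k) = w (t + h * of_int k)"
      unfolding AE_all_countable using AE_lebesgue_translate[OF vw'] by blast
    thus "AE t in lebesgue. joins_wells (\<lambda>k. w (t + h * of_int k))"
      using joins[OF h(1)] by eventually_elim simp
  qed
  have "ennreal (2 * r) * lattice_min r W \<le> energy r W w"
    by (rule ennreal_mult_le_of_forall_less[OF _ fin scaled]) (use r in simp)
  thus ?thesis using energy_AE_cong[OF vw'] by simp
qed

section \<open>Staircases and clamped ramps\<close>

lemma filterlim_affine_int_at_top:
  fixes t h :: real
  assumes "h > 0"
  shows "filterlim (\<lambda>k::int. t + h * of_int k) at_top at_top"
  using assms
  by (intro filterlim_tendsto_add_at_top[OF tendsto_const] filterlim_tendsto_pos_mult_at_top[OF tendsto_const]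
      filterlim_real_of_int_at_top)

lemma filterlim_affine_int_at_bot:
  fixes t h :: real
  assumes "h > 0"
  shows "filterlim (\<lambda>k::int. t + h * of_int k) at_bot at_bot"
proof (subst filterlim_at_bot, intro allI)
  fix Z :: real
  show "\<forall>\<^sub>F k in at_bot. t + h * of_int k \<le> Z"
    using eventually_le_at_bot[of "\<lfloor>(Z - t) / h\<rfloor>"]
  proof eventually_elim
    case (elim k)
    hence "of_int k \<le> (Z - t) / h" by (simp add: le_floor_iff)
    thus ?case using assms by (simp add: pos_le_divide_eq mult.commute)
  qed
qed

lemma joins_wells_sample:
  fixes f :: "real \<Rightarrow> real"
  assumes "(f \<longlongrightarrow> 1) at_top" "(f \<longlongrightarrow> -1) at_bot" "h > 0"
  shows "joins_wells (\<lambda>k. f (t + h * of_int k))"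
  unfolding joins_wells_def
  using filterlim_compose[OF assms(1) filterlim_affine_int_at_top[OF assms(3)]]
        filterlim_compose[OF assms(2) filterlim_affine_int_at_bot[OF assms(3)]] by auto

lemma osc_on_staircase_le:
  fixes a :: "int \<Rightarrow> real" and r x :: real
  assumes r: "r > 0" and "mono a" and "\<And>k. \<bar>a k\<bar> \<le> 1"
  defines "k \<equiv> \<lfloor>(x - r) / (2*r)\<rfloor>"
  shows "\<bar>osc_on {x-r<..<x+r} (\<lambda>y. a \<lfloor>y / (2*r)\<rfloor>)\<bar> \<le> a (k+1) - a k"
proof -
  let ?u = "\<lambda>y. a \<lfloor>y / (2*r)\<rfloor>"
  have h: "2 * r > 0" using r by simp
  have kx: "2*r * of_int k \<le> x - r" "x - r < 2*r * of_int k + 2*r"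
    using floor_divide_eq_iff[OF h, of k "x - r"] by (auto simp: k_def)
  have steps: "a k \<le> ?u y \<and> ?u y \<le> a (k+1)" if "x - r < y" "y < x + r" for y
  proof -
    have "k \<le> \<lfloor>y / (2*r)\<rfloor>"
      unfolding le_floor_iff using kx that h by (simp add: pos_le_divide_eq mult.commute)
    moreover have "\<lfloor>y / (2*r)\<rfloor> \<le> k + 1"
      unfolding floor_le_iff using kx that h by (simp add: pos_divide_less_eq algebra_simps)
    ultimately show ?thesis using assms(2) by (auto intro: monoD)
  qed
  have cd: "x - r < x + r" using r by simp
  have bnd: "AE y in lebesgue. y \<in> {x-r<..<x+r} \<longrightarrow> \<bar>?u y\<bar> \<le> 1" by (simp add: assms(3))
  have "ess_sup_on {x-r<..<x+r} ?u \<le> a (k+1)" "a k \<le> ess_sup_on {x-r<..<x+r} ?u"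
    "a k \<le> ess_inf_on {x-r<..<x+r} ?u" "ess_inf_on {x-r<..<x+r} ?u \<le> a (k+1)"
    using steps
    by (intro ess_sup_on_le[OF cd bnd] le_ess_sup_on[OF cd bnd] le_ess_inf_on[OF cd bnd]
        ess_inf_on_le[OF cd bnd]; auto)+
  thus ?thesis unfolding osc_on_def by linarith
qed

lemma energy_staircase_le:
  assumes H: "hyp_H W" and r: "r > 0" and "mono a" and "\<And>k. \<bar>a k\<bar> \<le> 1"
  shows "energy r W (\<lambda>x. a \<lfloor>x / (2*r)\<rfloor>) \<le> ennreal (2*r) * lattice_energy r W a"
proof -
  let ?u = "\<lambda>x. a \<lfloor>x / (2*r)\<rfloor>"
  have h: "2 * r > 0" using r by simp
  define jump where "jump k = ennreal ((a (k + 1) - a k)\<^sup>2 / (2 * r\<^sup>2))" for k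
  define well where "well k = ennreal (W (a k))" for k
  have "(\<integral>\<^sup>+x. ennreal ((osc_on {x-r<..<x+r} ?u)\<^sup>2 / (2 * r\<^sup>2)) \<partial>lborel)
        \<le> (\<integral>\<^sup>+x. jump \<lfloor>(x - r) / (2*r)\<rfloor> \<partial>lborel)"
    unfolding jump_def
  proof (intro nn_integral_mono ennreal_leI divide_right_mono)
    fix x
    show "(osc_on {x-r<..<x+r} ?u)\<^sup>2 \<le> (a (\<lfloor>(x - r) / (2*r)\<rfloor> + 1) - a \<lfloor>(x - r) / (2*r)\<rfloor>)\<^sup>2"
      using power_mono[OF osc_on_staircase_le[OF r assms(3,4), of x] abs_ge_zero, of 2] by simp
  qed simp
  also have "\<dots> = (\<integral>\<^sup>+x. jump \<lfloor>x / (2*r)\<rfloor> \<partial>lborel)"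
    using nn_integral_real_affine[of "\<lambda>x. jump \<lfloor>x / (2*r)\<rfloor>" 1 "- r"] by simp
  also have "\<dots> = ennreal (2*r) * (\<integral>\<^sup>+k. jump k \<partial>count_space UNIV)"
    by (rule nn_integral_lborel_floor[OF h])
  finally have osc: "(\<integral>\<^sup>+x. ennreal ((osc_on {x-r<..<x+r} ?u)\<^sup>2 / (2 * r\<^sup>2)) \<partial>lborel)
      \<le> ennreal (2*r) * (\<integral>\<^sup>+k. jump k \<partial>count_space UNIV)" .
  have wells: "(\<integral>\<^sup>+x. ennreal (W (?u x)) \<partial>lborel) = ennreal (2*r) * (\<integral>\<^sup>+k. well k \<partial>count_space UNIV)"
    unfolding well_def by (rule nn_integral_lborel_floor[OF h])
  have "lattice_energy r W a = (\<integral>\<^sup>+k. jump k + well k \<partial>count_space UNIV)"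
    unfolding lattice_energy_def lattice_term_def jump_def well_def using hyp_H_nonneg[OF H]
    by (intro nn_integral_cong) (simp add: ennreal_plus)
  also have "\<dots> = (\<integral>\<^sup>+k. jump k \<partial>count_space UNIV) + (\<integral>\<^sup>+k. well k \<partial>count_space UNIV)"
    by (rule nn_integral_add) (simp_all add: measurable_count_space_eq1)
  finally have split: "lattice_energy r W a
      = (\<integral>\<^sup>+k. jump k \<partial>count_space UNIV) + (\<integral>\<^sup>+k. well k \<partial>count_space UNIV)" .
  show ?thesis
    unfolding energy_lborel split distrib_left using osc wells by (intro add_mono) auto
qed

lemma sum_int_telescope:
  fixes g :: "int \<Rightarrow> 'a::ab_group_add"
  assumes "m \<le> M"
  shows "(\<Sum>k\<in>{m..M}. g (k+1) - g k) = g (M+1) - g m"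
  using assms
proof (induction M rule: int_ge_induct)
  case (step M)
  have "{m..M+1} = insert (M+1) {m..M}" using step.hyps by auto
  thus ?case using step.IH by simp
qed simp

lemma clamp_ramp_saturates:
  fixes s d :: real
  assumes d: "d > 0"
  obtains K0 K1 where "\<And>k. k \<le> K0 \<Longrightarrow> clamp (s + d * of_int k) = -1"
    and "\<And>k. K1 \<le> k \<Longrightarrow> clamp (s + d * of_int k) = 1"
proof
  fix k assume "k \<le> \<lfloor>(-1 - s) / d\<rfloor>"
  hence "of_int k * d \<le> -1 - s" using d by (simp add: le_floor_iff pos_le_divide_eq)
  thus "clamp (s + d * of_int k) = -1" by (simp add: clamp_def mult.commute)
next
  fix k assume "\<lceil>(1 - s) / d\<rceil> \<le> k"
  hence "1 - s \<le> of_int k * d" using d by (simp add: ceiling_le_iff pos_divide_le_eq)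
  thus "clamp (s + d * of_int k) = 1" by (simp add: clamp_def mult.commute)
qed

text \<open>Only finitely many increments are nonzero, and they telescope to at most \<open>1 - (-1)\<close>.\<close>
lemma nn_integral_clamp_increments_le:
  fixes s d :: real
  assumes d: "d > 0"
  defines "\<Delta> k \<equiv> clamp (s + d * of_int (k+1)) - clamp (s + d * of_int k)"
  shows "(\<integral>\<^sup>+k. ennreal (\<Delta> k) \<partial>count_space UNIV) \<le> 2"
proof -
  obtain K0 K1 where K0: "\<And>k. k \<le> K0 \<Longrightarrow> clamp (s + d * of_int k) = -1"
    and K1: "\<And>k. K1 \<le> k \<Longrightarrow> clamp (s + d * of_int k) = 1"
    using clamp_ramp_saturates[where s = s, OF d] by blast
  have nonneg: "0 \<le> \<Delta> k" for k
    unfolding \<Delta>_def using d by (simp add: monoD[OF mono_clamp] algebra_simps)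
  have "\<Delta> k = 0" if "k \<notin> {K0..K1}" for k
    using that K0[of k] K0[of "k+1"] K1[of k] K1[of "k+1"] by (cases "k < K0") (auto simp: \<Delta>_def)
  hence "(\<integral>\<^sup>+k. ennreal (\<Delta> k) \<partial>count_space UNIV) = (\<integral>\<^sup>+k. ennreal (\<Delta> k) * indicator {K0..K1} k \<partial>count_space UNIV)"
    by (intro nn_integral_cong) (auto simp: indicator_def)
  also have "\<dots> = ennreal (\<Sum>k\<in>{K0..K1}. \<Delta> k)"
    using nonneg by (simp add: nn_integral_indicator_finite emeasure_count_space_finite sum_ennreal)
  also have "\<dots> \<le> 2"
  proof (cases "K0 \<le> K1")
    case True
    have "(\<Sum>k\<in>{K0..K1}. \<Delta> k) \<le> 2"
      unfolding \<Delta>_def sum_int_telescope[OF True, of "\<lambda>k. clamp (s + d * of_int k)"]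
      using abs_clamp_le[of "s + d * of_int (K1+1)"] abs_clamp_le[of "s + d * of_int K0"]
      by (simp add: abs_le_iff)
    thus ?thesis by (metis ennreal_leI ennreal_numeral)
  qed simp
  finally show ?thesis .
qed

text \<open>The jumps of a clamped ramp of slope \<open>1/(2r)\<close> are at most \<open>2r\<close>, so the gradient part
  costs at most \<open>1/r\<close> times the total increase.\<close>
lemma lattice_energy_clamp_ramp_le:
  assumes H: "hyp_H W" and r: "r > 0"
  shows "lattice_energy r W (\<lambda>k. clamp (s + 2*r * of_int k)) \<le>
     ennreal (2/r) + (\<integral>\<^sup>+k. ennreal (W (clamp (s + 2*r * of_int k))) \<partial>count_space UNIV)"
proof -
  define g where "g k = clamp (s + 2*r * of_int k)" for k :: int
  define \<Delta> where "\<Delta> k = g (k+1) - g k" for k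
  have \<Delta>: "0 \<le> \<Delta> k" "\<Delta> k \<le> 2*r" for k
    using r clamp_lipschitz[of "s + 2*r * of_int (k+1)" "s + 2*r * of_int k"]
    by (auto simp: \<Delta>_def g_def monoD[OF mono_clamp] algebra_simps)
  have "ennreal (lattice_term r W g k) \<le> ennreal (1/r) * ennreal (\<Delta> k) + ennreal (W (g k))" for k
  proof -
    have "(\<Delta> k)\<^sup>2 / (2 * r\<^sup>2) \<le> (2*r) * \<Delta> k / (2 * r\<^sup>2)"
      using \<Delta>[of k] r by (intro divide_right_mono) (auto simp: power2_eq_square intro: mult_right_mono)
    also have "\<dots> = 1/r * \<Delta> k" using r by (simp add: power2_eq_square field_simps)
    finally have "lattice_term r W g k \<le> 1/r * \<Delta> k + W (g k)"
      unfolding lattice_term_def \<Delta>_def by simp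
    hence "ennreal (lattice_term r W g k) \<le> ennreal (1/r * \<Delta> k + W (g k))" by (rule ennreal_leI)
    also have "\<dots> = ennreal (1/r * \<Delta> k) + ennreal (W (g k))"
      using \<Delta>[of k] r hyp_H_nonneg[OF H] by (intro ennreal_plus) auto
    also have "ennreal (1/r * \<Delta> k) = ennreal (1/r) * ennreal (\<Delta> k)"
      using \<Delta>[of k] r by (intro ennreal_mult) auto
    finally show ?thesis .
  qed
  hence "lattice_energy r W g \<le> (\<integral>\<^sup>+k. ennreal (1/r) * ennreal (\<Delta> k) + ennreal (W (g k)) \<partial>count_space UNIV)"
    unfolding lattice_energy_def by (rule nn_integral_mono)
  also have "\<dots> = ennreal (1/r) * (\<integral>\<^sup>+k. ennreal (\<Delta> k) \<partial>count_space UNIV)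
      + (\<integral>\<^sup>+k. ennreal (W (g k)) \<partial>count_space UNIV)"
    by (simp add: nn_integral_add nn_integral_cmult measurable_count_space_eq1)
  also have "\<dots> \<le> ennreal (1/r) * 2 + (\<integral>\<^sup>+k. ennreal (W (g k)) \<partial>count_space UNIV)"
    using nn_integral_clamp_increments_le[of "2*r" s] r
    by (intro add_right_mono mult_left_mono) (simp_all add: \<Delta>_def g_def)
  also have "ennreal (1/r) * 2 = ennreal (2/r)"
    using r by (simp add: ennreal_mult''[symmetric] ennreal_numeral[symmetric] del: ennreal_numeral)
  finally show ?thesis by (simp add: g_def[abs_def])
qed

lemma c_W_nonneg: "hyp_H W \<Longrightarrow> 0 \<le> c_W W"
  unfolding c_W_def using integrable_continuous_interval[OF hyp_H_continuous_on] hyp_H_nonneg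
  by (intro integral_nonneg) auto

lemma nn_integral_W_clamp:
  assumes H: "hyp_H W"
  shows "(\<integral>\<^sup>+x. ennreal (W (clamp x)) \<partial>lborel) = ennreal (c_W W)"
proof -
  have "(W has_integral c_W W) {-1..1}"
    unfolding c_W_def using integrable_continuous_interval[OF hyp_H_continuous_on[OF H]]
    by (blast intro: has_integral_integral)
  thus ?thesis
    using hyp_H_nonneg[OF H] by (simp add: hyp_H_clamp_eq[OF H] nn_integral_has_integral_lebesgue)
qed

lemma nn_integral_indicator_lattice:
  fixes h s :: real
  assumes h: "h > 0" and s: "s \<in> {0..<h}"
  shows "(\<integral>\<^sup>+k. indicator {0..<h} (s + h * of_int k) \<partial>count_space UNIV) = 1"
proof -
  have "indicator {0..<h} (s + h * of_int k) = (indicator {0::int} k :: ennreal)" for k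
    using floor_divide_eq_iff[OF h, of k "s + h * of_int k"] floor_divide_eq_iff[OF h, of 0 "s + h * of_int k"] s
    by (auto simp: indicator_def)
  thus ?thesis by (simp add: emeasure_count_space_finite)
qed

text \<open>Averaging the bound for the clamped ramps over their offset \<open>s \<in> [0, 2r)\<close> reassembles the
  profile \<open>clamp\<close> on the line: the gradient bound \<open>2/r\<close> contributes \<open>4\<close> and the wells \<open>c_W\<close>.\<close>
lemma lattice_min_le_c_W:
  assumes H: "hyp_H W" and r: "r > 0"
  shows "ennreal (2*r) * lattice_min r W \<le> ennreal (4 + c_W W)"
proof -
  have h: "2*r > 0" using r by simp
  note [measurable] = hyp_H_borel_measurable[OF H]
  define F where "F x = ennreal (2/r) * indicator {0..<2*r} x + ennreal (W (clamp x))" for x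
  have F_meas: "F \<in> borel_measurable borel" unfolding F_def by measurable
  have ramp: "lattice_min r W \<le> (\<integral>\<^sup>+k. F (s + 2*r * of_int k) \<partial>count_space UNIV)"
    if s: "s \<in> {0..<2*r}" for s
  proof -
    have "lattice_min r W \<le> lattice_energy r W (\<lambda>k. clamp (s + 2*r * of_int k))"
      using joins_wells_sample[OF tendsto_clamp_at_top tendsto_clamp_at_bot h] by (rule lattice_min_le[OF H])
    also have "\<dots> \<le> ennreal (2/r) + (\<integral>\<^sup>+k. ennreal (W (clamp (s + 2*r * of_int k))) \<partial>count_space UNIV)"
      by (rule lattice_energy_clamp_ramp_le[OF H r])
    also have "\<dots> = (\<integral>\<^sup>+k. F (s + 2*r * of_int k) \<partial>count_space UNIV)"
      unfolding F_def using nn_integral_indicator_lattice[OF h s]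
      by (simp add: nn_integral_add nn_integral_cmult measurable_count_space_eq1)
    finally show ?thesis .
  qed
  have "ennreal (2*r) * lattice_min r W = (\<integral>\<^sup>+s. lattice_min r W * indicator {0..<2*r} s \<partial>lborel)"
    using h by (simp add: nn_integral_cmult_indicator mult.commute)
  also have "\<dots> \<le> (\<integral>\<^sup>+s. indicator {0..<2*r} s * (\<integral>\<^sup>+k. F (s + 2*r * of_int k) \<partial>count_space UNIV) \<partial>lborel)"
    using ramp by (intro nn_integral_mono) (auto simp: indicator_def)
  also have "\<dots> = (\<integral>\<^sup>+x. F x \<partial>lborel)"
    by (rule nn_integral_lborel_periodize[OF F_meas h, symmetric])
  also have "\<dots> = ennreal (2/r) * ennreal (2*r) + ennreal (c_W W)"
    unfolding F_def using h
    by (simp add: nn_integral_add nn_integral_cmult_indicator nn_integral_W_clamp[OF H])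
  also have "\<dots> = ennreal (4 + c_W W)"
    using r c_W_nonneg[OF H] by (simp add: ennreal_mult''[symmetric] ennreal_plus)
  finally show ?thesis .
qed

lemma lattice_min_le_four_div:
  assumes H: "hyp_H W" and r: "r > 0"
  shows "ennreal (2*r) * lattice_min r W \<le> ennreal (4 / r)"
proof -
  have "ennreal (2*r) * lattice_min r W \<le> ennreal (2*r) * ennreal (2 / r\<^sup>2)"
    using lattice_min_le_sign_profile[OF H] by (rule mult_left_mono) simp
  also have "\<dots> = ennreal (4 / r)"
    using r by (simp add: ennreal_mult''[symmetric] power2_eq_square field_simps)
  finally show ?thesis .
qed

section \<open>The minimizer\<close>

lemma filterlim_floor_divide_at_top:
  fixes c :: real
  assumes "c > 0"
  shows "filterlim (\<lambda>x. \<lfloor>x / c\<rfloor>) at_top at_top"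
proof (subst filterlim_at_top, intro allI)
  fix Z :: int
  show "\<forall>\<^sub>F x in at_top. Z \<le> \<lfloor>x / c\<rfloor>"
    using eventually_ge_at_top[of "c * of_int Z"]
    by eventually_elim (use assms in \<open>simp add: le_floor_iff pos_le_divide_eq mult.commute\<close>)
qed

lemma filterlim_floor_divide_at_bot:
  fixes c :: real
  assumes "c > 0"
  shows "filterlim (\<lambda>x. \<lfloor>x / c\<rfloor>) at_bot at_bot"
proof (subst filterlim_at_bot, intro allI)
  fix Z :: int
  show "\<forall>\<^sub>F x in at_bot. \<lfloor>x / c\<rfloor> \<le> Z"
    using eventually_le_at_bot[of "c * of_int Z"]
  proof eventually_elim
    case (elim x)
    hence "x / c \<le> of_int Z" using assms by (simp add: pos_divide_le_eq mult.commute)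
    thus ?case by (simp add: floor_le_iff)
  qed
qed

lemma staircase_admissible:
  assumes r: "r > 0" and a: "a \<in> centered_profiles"
  shows "admissible (\<lambda>x. a \<lfloor>x / (2*r)\<rfloor>)"
proof -
  let ?u = "\<lambda>x. a \<lfloor>x / (2*r)\<rfloor>"
  have h: "2 * r > 0" using r by simp
  have ma: "mono a" and ab: "\<And>k. \<bar>a k\<bar> \<le> 1" and ja: "joins_wells a"
    using a by (auto simp: centered_profiles_def)
  have "?u \<in> borel_measurable lborel" by (simp add: measurable_lborel2)
  hence "Linf ?u" unfolding Linf_def using ab by (auto intro!: exI[of _ 1] measurable_completion)
  moreover have "mono ?u"
    using h by (intro monoI monoD[OF ma] floor_mono divide_right_mono) auto
  moreover have "(?u \<longlongrightarrow> 1) at_top" "(?u \<longlongrightarrow> -1) at_bot"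
    using filterlim_compose[OF _ filterlim_floor_divide_at_top[OF h]]
      filterlim_compose[OF _ filterlim_floor_divide_at_bot[OF h]] ja
    by (auto simp: joins_wells_def)
  ultimately show ?thesis by (simp add: admissible_def)
qed

lemma AE_joins_wells_sample:
  fixes u v :: "real \<Rightarrow> real" and h p q :: real
  assumes "(u \<longlongrightarrow> 1) at_top" "(u \<longlongrightarrow> -1) at_bot" "h > 0"
    and eq: "AE x in lebesgue. x \<notin> {p..q} \<longrightarrow> u x = v x"
  shows "AE t in lebesgue. joins_wells (\<lambda>k. v (t + h * of_int k))"
proof -
  have "AE t in lebesgue. \<forall>k::int. t + h * of_int k \<notin> {p..q} \<longrightarrow> u (t + h * of_int k) = v (t + h * of_int k)"
    unfolding AE_all_countable using AE_lebesgue_translate[OF eq] by blast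
  thus ?thesis
  proof eventually_elim
    case (elim t)
    have top: "\<forall>\<^sub>F k in at_top. u (t + h * of_int k) = v (t + h * of_int k)"
      using filterlim_affine_int_at_top[OF assms(3), of t, unfolded filterlim_at_top, rule_format, of "q + 1"]
      by eventually_elim (use elim in auto)
    have bot: "\<forall>\<^sub>F k in at_bot. u (t + h * of_int k) = v (t + h * of_int k)"
      using filterlim_affine_int_at_bot[OF assms(3), of t, unfolded filterlim_at_bot, rule_format, of "p - 1"]
      by eventually_elim (use elim in auto)
    have "joins_wells (\<lambda>k. u (t + h * of_int k))" by (rule joins_wells_sample[OF assms(1-3)])
    thus ?case
      using Lim_transform_eventually[OF _ top] Lim_transform_eventually[OF _ bot]
      unfolding joins_wells_def by simp
  qed
qed

definition energy_in :: "real \<Rightarrow> (real \<Rightarrow> real) \<Rightarrow> real set \<Rightarrow> (real \<Rightarrow> real) \<Rightarrow> ennreal" where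
  "energy_in r W A u =
     (\<integral>\<^sup>+x. indicator A x * ennreal ((osc_on {x-r<..<x+r} u)\<^sup>2 / (2 * r\<^sup>2)) \<partial>lborel)
   + (\<integral>\<^sup>+x. indicator A x * ennreal (W (u x)) \<partial>lborel)"

lemma energy_on_eq_energy_in: "energy_on r W a b u = energy_in r W {a<..<b} u"
  unfolding energy_on_def energy_in_def by (simp add: nn_integral_completion)

lemma energy_split:
  assumes "A \<in> sets borel"
  shows "energy r W u = energy_in r W A u + energy_in r W (- A) u"
proof -
  have "A \<in> sets lborel" using assms by simp
  note split = nn_integral_split[OF this]
  show ?thesis
    unfolding energy_lborel energy_in_def
    by (subst split[of "\<lambda>x. ennreal ((osc_on {x-r<..<x+r} u)\<^sup>2 / (2 * r\<^sup>2))"],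
        subst split[of "\<lambda>x. ennreal (W (u x))"]) (simp add: ac_simps)
qed

lemma energy_in_cong:
  assumes "\<And>x. x \<in> A \<Longrightarrow> AE y in lebesgue. y \<in> {x-r<..<x+r} \<longrightarrow> u y = v y"
    and "AE x in lebesgue. x \<in> A \<longrightarrow> u x = v x"
  shows "energy_in r W A u = energy_in r W A v"
proof -
  have "indicator A x * ennreal ((osc_on {x-r<..<x+r} u)\<^sup>2 / (2 * r\<^sup>2))
      = indicator A x * ennreal ((osc_on {x-r<..<x+r} v)\<^sup>2 / (2 * r\<^sup>2))" for x
    using osc_on_cong[OF assms(1)] by (cases "x \<in> A") auto
  moreover have "(\<integral>\<^sup>+x. indicator A x * ennreal (W (u x)) \<partial>lborel) = (\<integral>\<^sup>+x. indicator A x * ennreal (W (v x)) \<partial>lborel)"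
  proof (intro nn_integral_cong_AE)
    show "AE x in lborel. indicator A x * ennreal (W (u x)) = indicator A x * ennreal (W (v x))"
      using assms(2) unfolding AE_completion_iff by eventually_elim (auto simp: indicator_def)
  qed
  ultimately show ?thesis unfolding energy_in_def by simp
qed

text \<open>Outside \<open>(a, b)\<close> every window \<open>(x - r, x + r)\<close> misses \<open>[a + r, b - r]\<close>, so the energy there is
  unchanged; finiteness of the total energy allows cancelling it.\<close>
lemma local_minimizerI:
  assumes r: "r > 0" and L: "Linf_loc u" and fin: "energy r W u \<noteq> \<infinity>"
    and min: "\<And>v p q. Linf_loc v \<Longrightarrow> AE x in lebesgue. x \<notin> {p..q} \<longrightarrow> u x = v x \<Longrightarrow>
                energy r W u \<le> energy r W v"
  shows "local_minimizer r W u"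
  unfolding local_minimizer_def
proof (intro conjI allI impI L)
  fix a b :: real and v
  assume "a < b" "2 * r < b - a" and Lv: "Linf_loc v"
    and eq: "AE x in lebesgue. x \<notin> {a + r..b - r} \<longrightarrow> u x = v x"
  let ?A = "{a<..<b}"
  have "energy_in r W (- ?A) u = energy_in r W (- ?A) v"
  proof (rule energy_in_cong)
    show "AE y in lebesgue. y \<in> {x-r<..<x+r} \<longrightarrow> u y = v y" if "x \<in> - ?A" for x
      using eq by eventually_elim (use that in auto)
    show "AE x in lebesgue. x \<in> - ?A \<longrightarrow> u x = v x"
      using eq by eventually_elim (use r in auto)
  qed
  moreover have "energy_in r W ?A u + energy_in r W (- ?A) u \<le> energy_in r W ?A v + energy_in r W (- ?A) v"
    using min[OF Lv eq] energy_split[of ?A r W] by simp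
  moreover have "energy_in r W (- ?A) u \<noteq> \<infinity>"
    using fin energy_split[of ?A r W u] by (auto simp: top_add)
  ultimately show "energy_on r W a b u \<le> energy_on r W a b v"
    unfolding energy_on_eq_energy_in by (simp add: ennreal_add_left_cancel_le add.commute)
qed

lemma staircase_le_energy:
  assumes H: "hyp_H W" and r: "r > 0" and a: "a \<in> centered_profiles"
    and min: "lattice_energy r W a = lattice_min r W"
    and L: "Linf_loc v" and joins: "\<And>h. 0 < h \<Longrightarrow> AE t in lebesgue. joins_wells (\<lambda>k. v (t + h * of_int k))"
  shows "energy r W (\<lambda>x. a \<lfloor>x / (2*r)\<rfloor>) \<le> energy r W v"
proof -
  have "lattice_min r W \<noteq> \<infinity>"
    using lattice_min_le_sign_profile[OF H, of r] by (auto simp: top_unique)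
  hence "ennreal (2 * r) * lattice_min r W \<le> energy r W v"
    by (rule lattice_min_le_energy[OF H r _ L joins])
  thus ?thesis
    using energy_staircase_le[OF H r, of a] a min by (auto simp: centered_profiles_def)
qed

lemma staircase_energy_bound:
  assumes H: "hyp_H W" and r: "r > 0" and a: "a \<in> centered_profiles"
    and min: "lattice_energy r W a = lattice_min r W"
  shows "energy r W (\<lambda>x. a \<lfloor>x / (2*r)\<rfloor>) \<le> ennreal (min (4 / r) (4 + c_W W))"
proof -
  have "energy r W (\<lambda>x. a \<lfloor>x / (2*r)\<rfloor>) \<le> ennreal (2*r) * lattice_min r W"
    using energy_staircase_le[OF H r, of a] a min by (simp add: centered_profiles_def)
  thus ?thesis
    using lattice_min_le_four_div[OF H r] lattice_min_le_c_W[OF H r]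
    by (auto simp: min_def intro: order_trans)
qed

theorem theorem1p1:
  fixes r :: real and W :: "real \<Rightarrow> real"
  assumes "r > 0" and "hyp_H W"
  shows "\<exists>u. local_minimizer r W u \<and> admissible u \<and>
           (\<forall>v. admissible v \<longrightarrow> energy r W u \<le> energy r W v) \<and>
           energy r W u \<le> ennreal (min (4 / r) (4 + c_W W))"
proof -
  note r = assms(1) and H = assms(2)
  obtain a where a: "a \<in> centered_profiles" and min: "lattice_energy r W a = lattice_min r W"
    using lattice_min_attained[OF H r] .
  define u where "u x = a \<lfloor>x / (2*r)\<rfloor>" for x
  note lower = staircase_le_energy[OF H r a min, folded u_def[abs_def]]
  have adm: "admissible u" unfolding u_def[abs_def] by (rule staircase_admissible[OF r a])
  hence u: "Linf_loc u" "(u \<longlongrightarrow> 1) at_top" "(u \<longlongrightarrow> -1) at_bot"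
    by (simp_all add: admissible_def Linf_imp_Linf_loc)
  have bound: "energy r W u \<le> ennreal (min (4 / r) (4 + c_W W))"
    unfolding u_def[abs_def] by (rule staircase_energy_bound[OF H r a min])
  have "\<forall>v. admissible v \<longrightarrow> energy r W u \<le> energy r W v"
    by (auto intro!: lower joins_wells_sample Linf_imp_Linf_loc simp: admissible_def)
  moreover have "local_minimizer r W u"
  proof (rule local_minimizerI[OF r u(1)])
    show "energy r W u \<noteq> \<infinity>" using bound by (auto simp: top_unique)
    show "energy r W u \<le> energy r W v"
      if "Linf_loc v" "AE x in lebesgue. x \<notin> {p..q} \<longrightarrow> u x = v x" for v p q
      using that by (intro lower AE_joins_wells_sample[OF u(2,3)])
  qed
  ultimately show ?thesis using adm bound by blast
qed

end
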